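(* The gluing invariant $\mathbf{G}$ is a well-defined invariant of virtual knots, it is a Vassiliev invariant of degree one, and it is the universal Vassiliev invariant of degree one for virtual knots: for every abelian group $A$, every Vassiliev invariant $V$ of degree one of virtual knots with values in $A$, and all homotopic virtual knots $K$ and $K_0$, the difference $\mathbf{G}(K)-\mathbf{G}(K_0)$ lies in $2\,\mathbf{Z}[\mathcal{H}^1]$ and $$V(K)=V(K_0)+V^{\ast}\Big(\tfrac12\big(\mathbf{G}(K)-\mathbf{G}(K_0)\big)\Big).$$
   Context: A virtual knot diagram is an oriented closed curve immersed in the plane with finitely many transverse double points, each a classical crossing (with over/under data) or a virtual crossing (encircled). Virtual knots are equivalence classes of diagrams under the classical Reidemeister moves and the virtual Reidemeister moves (V1, V2, V3 involving only virtual crossings, and the mixed move passing a strand with only virtual crossings across a classical crossing). Singular virtual knots additionally have finitely many double-points (singular crossings), with equivalence generated by these moves and the standard moves involving double-points (passing a strand over/under a double-point, passing a virtual strand across a double-point, and rotating a double-point so that an adjacent classical crossing moves from one side to the other). Two (singular) virtual knots are homotopic if related by these moves together with crossing changes at classical crossings; flat singular virtual knots (classical crossings without over/under data, up to the flat versions of all moves) correspond exactly to homotopy classes of singular virtual knots. Let $\mathcal{H}^1$ be the set of homotopy classes (equivalently flat classes) of singular virtual knots with exactly one double-point, and $\mathbf{Z}[\mathcal{H}^1]$ the free abelian group on it. The sign $\operatorname{sign}(d)$ of a classical crossing is $+1$ if (over-strand direction, under-strand direction) is positively oriented, $-1$ otherwise. For a virtual knot $K$ with diagram $\widetilde K$ and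 a classical crossing $d$, $[\widetilde K^d_{glue}]\in\mathcal{H}^1$ is the flat class of the shadow of the singular virtual knot obtained by replacing $d$ by a double-point; $[\widetilde K^0_{sing}]\in\mathcal{H}^1$ is the flat class obtained by adding a small kink to $\widetilde K$ by a Reidemeister 1 move and replacing the kink crossing by a double-point. Define $\mathbf{G}(K)=\sum_d\operatorname{sign}(d)([\widetilde K^d_{glue}]-[\widetilde K^0_{sing}])\in\mathbf{Z}[\mathcal{H}^1]$, summed over classical crossings of $\widetilde K$. Vassiliev invariants: an invariant $V$ of virtual knots with values in $A$ extends to singular virtual knots by $V(K)=V(K^+)-V(K^-)$, where $K^\pm$ is obtained by resolving a chosen double-point into a positive/negative classical crossing (independent of the order of resolution). $V$ is Vassiliev of degree $\le n$ if it vanishes on singular virtual knots with more than $n$ double-points; the degree is the least such $n$. For $V$ of degree one, its value $V^{(1)}$ on singular virtual knots with one double-point is constant on homotopy classes, and $V^\ast:\mathbf{Z}[\mathcal{H}^1]\to A$ is the homomorphism with $V^\ast([K_\bullet])=V^{(1)}(K_\bullet)$ for each singular virtual knot $K_\bullet$ with one double-point. In the displayed formula, $\tfrac12 x$ for $x\in 2\mathbf{Z}[\mathcal{H}^1]$ denotes the unique $y\in\mathbf{Z}[\mathcal{H}^1]$ with $2y=x$. *)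

theory Defs
  imports Main "HOL-Library.Function_Algebras"
begin

text \<open>Combinatorial model: (singular) virtual knot diagrams as Gauss diagrams.
A diagram is a word of chord endpoints (chord name, is_tail) read along the knot,
together with a kind for each chord.  Each chord carries its flat arrow:
the tail is the branch x such that (direction of x, direction of the other branch)
is positively oriented.  A classical chord  Cl ov  records ov = (the tail branch is
the over-strand); hence its sign is +1 iff ov.  Sg marks a double point.\<close>

datatype ckind = Cl bool | Sg

type_synonym letter = "nat \<times> bool"
type_synonym gd = "letter list \<times> (nat \<Rightarrow> ckind)"

definition chords :: "letter list \<Rightarrow> nat set" where
  "chords w = fst ` set w"

definition wf_gd :: "gd \<Rightarrow> bool" where
  "wf_gd d \<longleftrightarrow> distinct (fst d) \<and> (\<forall>c b. (c, b) \<in> set (fst d) \<longrightarrow> (c, \<not> b) \<in> set (fst d))"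

definition flipl :: "letter \<Rightarrow> letter" where
  "flipl l = (fst l, \<not> snd l)"

text \<open>Over/under (and singular) conditions for a Reidemeister-3 type triangle.
Strands 1,2,3; chord a between 1,2, b between 1,3, c between 2,3; s12 = tail of a on
strand 1, s23 = tail of c on strand 2, s31 = tail of b on strand 3.\<close>
fun r3_kinds :: "ckind \<Rightarrow> ckind \<Rightarrow> ckind \<Rightarrow> bool \<Rightarrow> bool \<Rightarrow> bool \<Rightarrow> bool" where
  "r3_kinds (Cl oa) (Cl ob) (Cl oc) s12 s23 s31 =
     (\<not> ((s12 = oa) = (s23 = oc) \<and> (s23 = oc) = (s31 = ob)))"
| "r3_kinds Sg (Cl ob) (Cl oc) s12 s23 s31 = ((s31 = ob) = (\<not> (s23 = oc)))"
| "r3_kinds (Cl oa) Sg (Cl oc) s12 s23 s31 = ((\<not> (s12 = oa)) = (s23 = oc))"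
| "r3_kinds (Cl oa) (Cl ob) Sg s12 s23 s31 = ((s12 = oa) = (\<not> (s31 = ob)))"
| "r3_kinds _ _ _ _ _ _ = False"

definition r3_ok :: "(nat \<Rightarrow> ckind) \<Rightarrow> letter list \<Rightarrow> letter list \<Rightarrow> letter list \<Rightarrow> bool" where
  "r3_ok k X Y Z \<longleftrightarrow> (\<exists>a b c s12 s23 s31 o1 o2 o3. distinct [a, b, c] \<and>
     X = (if o1 then [(a, s12), (b, \<not> s31)] else [(b, \<not> s31), (a, s12)]) \<and>
     Y = (if o2 then [(a, \<not> s12), (c, s23)] else [(c, s23), (a, \<not> s12)]) \<and>
     Z = (if o3 then [(b, s31), (c, \<not> s23)] else [(c, \<not> s23), (b, s31)]) \<and>
     ((o1 = o3) = (s12 = s23)) \<and> ((o2 = o3) = (s31 \<noteq> s12)) \<and>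
     r3_kinds (k a) (k b) (k c) s12 s23 s31)"

text \<open>Rotation of a double point d across an adjacent classical crossing c.\<close>
definition rot_ok :: "(nat \<Rightarrow> ckind) \<Rightarrow> letter list \<Rightarrow> letter list \<Rightarrow> bool" where
  "rot_ok k X Y \<longleftrightarrow> (\<exists>c d e oc. c \<noteq> d \<and> k c = Cl oc \<and> k d = Sg \<and>
     X \<in> {[(c, e), (d, \<not> e)], [(d, \<not> e), (c, e)]} \<and>
     Y \<in> {[(c, \<not> e), (d, e)], [(d, e), (c, \<not> e)]})"

inductive sv_step :: "gd \<Rightarrow> gd \<Rightarrow> bool" where
  rot: "sv_step (u @ v, k) (v @ u, k)"
| ren: "inj_on f (chords w) \<Longrightarrow> (\<forall>c\<in>chords w. k' (f c) = k c) \<Longrightarrow>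
        sv_step (w, k) (map (\<lambda>(c, b). (f c, b)) w, k')"
| r1: "c \<notin> chords (u @ v) \<Longrightarrow>
        sv_step (u @ v, k) (u @ [(c, b), (c, \<not> b)] @ v, k(c := Cl ov))"
| r2: "c \<notin> chords (u @ v @ w) \<Longrightarrow> d \<notin> chords (u @ v @ w) \<Longrightarrow> c \<noteq> d \<Longrightarrow>
        X \<in> {[(c, \<not> b), (d, b)], [(d, b), (c, \<not> b)]} \<Longrightarrow>
        sv_step (u @ v @ w, k)
          (u @ [(c, b), (d, \<not> b)] @ v @ X @ w, k(c := Cl ov, d := Cl (\<not> ov)))"
| r3: "r3_ok k X Y Z \<Longrightarrow>
        sv_step (A @ X @ B @ Y @ C @ Z @ D, k) (A @ rev X @ B @ rev Y @ C @ rev Z @ D, k)"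
| rotv: "rot_ok k X Y \<Longrightarrow>
        sv_step (A @ X @ B @ Y @ C, k)
          (A @ rev (map flipl X) @ B @ rev (map flipl Y) @ C, k)"

inductive cc_step :: "gd \<Rightarrow> gd \<Rightarrow> bool" where
  cc: "c \<in> chords w \<Longrightarrow> k c = Cl ov \<Longrightarrow> cc_step (w, k) (w, k(c := Cl (\<not> ov)))"

definition veq :: "gd \<Rightarrow> gd \<Rightarrow> bool" where
  "veq = equivclp (\<lambda>x y. wf_gd x \<and> wf_gd y \<and> sv_step x y)"

definition homot :: "gd \<Rightarrow> gd \<Rightarrow> bool" where
  "homot = equivclp (\<lambda>x y. wf_gd x \<and> wf_gd y \<and> (sv_step x y \<or> cc_step x y))"

definition sing_chords :: "gd \<Rightarrow> nat set" where
  "sing_chords d = {c \<in> chords (fst d). snd d c = Sg}"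

definition nsing :: "gd \<Rightarrow> nat" where
  "nsing d = card (sing_chords d)"

definition is_vdiag :: "gd \<Rightarrow> bool" where
  "is_vdiag d \<longleftrightarrow> wf_gd d \<and> sing_chords d = {}"

definition vinvariant :: "(gd \<Rightarrow> 'a) \<Rightarrow> bool" where
  "vinvariant V \<longleftrightarrow> (\<forall>d d'. is_vdiag d \<and> is_vdiag d' \<and> veq d d' \<longrightarrow> V d = V d')"

text \<open>Extension to singular diagrams: V(K) = V(K+) - V(K-) at each double point.
Resolving a double point into a positive (negative) crossing keeps its flat arrow and
makes the tail branch over (under).\<close>
definition Vext :: "(gd \<Rightarrow> 'a::ab_group_add) \<Rightarrow> gd \<Rightarrow> 'a" where
  "Vext V d = (\<Sum>S\<in>Pow (sing_chords d).
     (if even (card S) then id else uminus)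
       (V (fst d, \<lambda>c. if c \<in> S then Cl False else if c \<in> sing_chords d then Cl True else snd d c)))"

definition vass_le :: "(gd \<Rightarrow> 'a::ab_group_add) \<Rightarrow> nat \<Rightarrow> bool" where
  "vass_le V n \<longleftrightarrow> (\<forall>d. wf_gd d \<and> nsing d > n \<longrightarrow> Vext V d = 0)"

definition vass_deg :: "(gd \<Rightarrow> 'a::ab_group_add) \<Rightarrow> nat \<Rightarrow> bool" where
  "vass_deg V n \<longleftrightarrow> vass_le V n \<and> (\<forall>m<n. \<not> vass_le V m)"

text \<open>Homotopy classes; H^1; elements of Z[H^1] are finitely supported gd set => int.\<close>
definition hclass :: "gd \<Rightarrow> gd set" where
  "hclass d = {d'. homot d d'}"

definition H1 :: "gd set set" where
  "H1 = {hclass d | d. wf_gd d \<and> nsing d = 1}"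

fun sgn_ck :: "ckind \<Rightarrow> int" where
  "sgn_ck (Cl ov) = (if ov then 1 else -1)"
| "sgn_ck Sg = 0"

definition fresh :: "letter list \<Rightarrow> nat" where
  "fresh w = Suc (Max (insert 0 (chords w)))"

definition glue :: "gd \<Rightarrow> nat \<Rightarrow> gd" where
  "glue d c = (fst d, (snd d)(c := Sg))"

definition sing0 :: "gd \<Rightarrow> gd" where
  "sing0 d = ((fresh (fst d), True) # (fresh (fst d), False) # fst d, (snd d)(fresh (fst d) := Sg))"

definition Gl :: "gd \<Rightarrow> gd set \<Rightarrow> int" where
  "Gl d = (\<lambda>h. \<Sum>c\<in>{c \<in> chords (fst d). snd d c \<noteq> Sg}.
     sgn_ck (snd d c) * ((if h = hclass (glue d c) then 1 else 0) - (if h = hclass (sing0 d) then 1 else 0)))"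

definition zsmul :: "int \<Rightarrow> 'a::ab_group_add \<Rightarrow> 'a" where
  "zsmul n x = (if 0 \<le> n then (\<Sum>i<nat n. x) else - (\<Sum>i<nat (- n). x))"

text \<open>V^*: the homomorphism Z[H^1] -> A sending a class to the value of V on any representative.\<close>
definition Vstar :: "(gd \<Rightarrow> 'a::ab_group_add) \<Rightarrow> (gd set \<Rightarrow> int) \<Rightarrow> 'a" where
  "Vstar V z = (\<Sum>h\<in>{h. z h \<noteq> 0}. zsmul (z h) (Vext V (SOME d. d \<in> h)))"

end

theory Submission
  imports Defs "HOL-Library.Multiset"
begin

text \<open>A Reidemeister move preserves G: the crossing created by R1 has a gluing homotopic to
the kink class, because a kink of a double point can be slid past every classical crossing;
the two crossings created by R2 have opposite signs and homotopic gluings; R3 and the virtual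
moves preserve all gluing classes. A crossing change giving d the sign e changes G by
2e ([K^d_glue] - [K^0_sing]) and changes a degree-one invariant V by e V^(1)(K^d_glue), where
V^(1) vanishes on the kink class (both resolutions of a kink are R1-equivalent to K) and is
constant on homotopy classes (by the four-term relation at a second double point). Summing along
a homotopy from K0 to K gives the formula. G has degree at most one since, with two double
points, the signs of a crossing cancel in the alternating sum over resolutions; it is not of
degree zero because a double point whose chord is interlaced with an odd number of chords is
never homotopic to a kink.\<close>

section \<open>Words, moves and homotopy\<close>

definition wf_word :: "letter list \<Rightarrow> bool" where
  "wf_word w \<longleftrightarrow> distinct w \<and> (\<forall>c b. (c, b) \<in> set w \<longrightarrow> (c, \<not> b) \<in> set w)"

lemma wf_gd_iff [simp]: "wf_gd (w, k) \<longleftrightarrow> wf_word w"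
  by (simp add: wf_gd_def wf_word_def)

lemma chords_Nil [simp]: "chords [] = {}"
  and chords_Cons [simp]: "chords (l # w) = insert (fst l) (chords w)"
  and chords_append [simp]: "chords (u @ v) = chords u \<union> chords v"
  and chords_rev [simp]: "chords (rev u) = chords u"
  and chords_map_flipl [simp]: "chords (map flipl u) = chords u"
  and finite_chords [simp]: "finite (chords w)"
  by (auto simp: chords_def flipl_def image_image)

lemma chords_rename: "chords (map (\<lambda>(c, b). (f c, b)) w) = f ` chords w"
  by (force simp: chords_def image_iff)

lemma chords_iff: "c \<in> chords w \<longleftrightarrow> (\<exists>b. (c, b) \<in> set w)"
  by (force simp: chords_def)

lemma in_chordsI: "(c, b) \<in> set w \<Longrightarrow> c \<in> chords w"
  by (auto simp: chords_iff)

lemma notin_chordsI: "(c, b) \<notin> set w \<Longrightarrow> (c, \<not> b) \<notin> set w \<Longrightarrow> c \<notin> chords w"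
  unfolding chords_iff by (smt (verit))

lemma fresh_gt: "c \<in> chords w \<Longrightarrow> c < fresh w"
  unfolding fresh_def by (simp add: le_imp_less_Suc)

lemma fresh_notin_chords: "fresh w \<notin> chords w"
  and Suc_fresh_notin_chords: "Suc (fresh w) \<notin> chords w"
  using fresh_gt less_SucI by blast+

lemma wf_word_flip: "wf_word w \<Longrightarrow> (c, b) \<in> set w \<Longrightarrow> (c, \<not> b) \<in> set w"
  unfolding wf_word_def by blast

lemma wf_word_letter:
  assumes "wf_word w" "c \<in> chords w"
  shows "(c, b) \<in> set w"
proof -
  obtain b0 where "(c, b0) \<in> set w" using assms(2) chords_iff by blast
  then show ?thesis using wf_word_flip[OF assms(1)] by (cases "b = b0") (auto simp: eq_commute)
qed

lemma wf_word_mset: "wf_word w \<Longrightarrow> mset w' = mset w \<Longrightarrow> wf_word w'"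
  unfolding wf_word_def by (metis mset_eq_setD mset_eq_imp_distinct_iff)

lemma wf_word_add_chord:
  assumes "c \<notin> chords w" and "mset w' = mset ((c, b) # (c, \<not> b) # w)"
  shows "wf_word w' \<longleftrightarrow> wf_word w"
proof -
  have "set w' = insert (c, b) (insert (c, \<not> b) (set w))"
    using assms(2) by (metis mset_eq_setD list.set(2))
  moreover have "distinct w' \<longleftrightarrow> distinct ((c, b) # (c, \<not> b) # w)"
    using assms(2) by (rule mset_eq_imp_distinct_iff)
  ultimately show ?thesis
    using assms(1) unfolding wf_word_def chords_iff by auto
qed

lemma wf_word_kink: "wf_word w \<Longrightarrow> c \<notin> chords w \<Longrightarrow> wf_word ((c, b) # (c, \<not> b) # w)"
  using wf_word_add_chord by blast

lemma wf_word_rotate: "wf_word (u @ v) \<longleftrightarrow> wf_word (v @ u)"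
  unfolding wf_word_def by auto

lemma homot_refl [intro, simp]: "homot x x"
  by (simp add: homot_def)

lemma homot_sym: "homot x y \<Longrightarrow> homot y x"
  unfolding homot_def by (rule equivclp_sym)

lemma homot_trans [trans]: "homot x y \<Longrightarrow> homot y z \<Longrightarrow> homot x z"
  unfolding homot_def by (rule equivclp_trans)

lemma homot_sv_step:
  "wf_word w \<Longrightarrow> wf_word w' \<Longrightarrow> sv_step (w, k) (w', k') \<Longrightarrow> homot (w, k) (w', k')"
  unfolding homot_def by (rule r_into_equivclp) simp

lemma homot_sv_step_rev:
  "wf_word w \<Longrightarrow> wf_word w' \<Longrightarrow> sv_step (w', k') (w, k) \<Longrightarrow> homot (w, k) (w', k')"
  using homot_sv_step homot_sym by blast

lemma homot_crossing_change:
  assumes "wf_word w" "c \<in> chords w" "k c = Cl ov"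
  shows "homot (w, k) (w, k(c := Cl ov'))"
proof (cases "ov' = ov")
  case True
  then show ?thesis using assms(3) by (simp add: fun_upd_idem)
next
  case False
  then have "ov' = (\<not> ov)" by auto
  then have "cc_step (w, k) (w, k(c := Cl ov'))"
    using cc_step.cc[of c w k ov, OF assms(2,3)] by simp
  then show ?thesis unfolding homot_def using assms(1) by (intro r_into_equivclp) simp
qed

lemma homot_rotate: "wf_word (u @ v) \<Longrightarrow> homot (u @ v, k) (v @ u, k)"
  by (rule homot_sv_step) (auto simp: wf_word_rotate intro: sv_step.rot)

lemma veq_sym: "veq x y \<Longrightarrow> veq y x"
  unfolding veq_def by (rule equivclp_sym)

lemma veq_trans [trans]: "veq x y \<Longrightarrow> veq y z \<Longrightarrow> veq x z"
  unfolding veq_def by (rule equivclp_trans)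

lemma veq_sv_step: "wf_word w \<Longrightarrow> wf_word w' \<Longrightarrow> sv_step (w, k) (w', k') \<Longrightarrow> veq (w, k) (w', k')"
  unfolding veq_def by (rule r_into_equivclp) simp

lemma hclass_eq_iff: "hclass a = hclass b \<longleftrightarrow> homot a b"
  unfolding hclass_def using homot_refl homot_sym homot_trans by blast

lemma equivclp_preserves:
  assumes "equivclp r x y"
    and "\<And>x y. r x y \<Longrightarrow> P x \<longleftrightarrow> P y"
    and "\<And>x y. r x y \<Longrightarrow> P x \<Longrightarrow> P y \<Longrightarrow> f x = f y"
    and "P x"
  shows "P y \<and> f x = f y"
  using assms(1) unfolding equivclp_def
proof (induction rule: rtranclp_induct)
  case (step y z)
  then have "r y z \<or> r z y" by (simp add: symclp_def)
  then show ?case using step assms(2,3) by metis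
qed (use assms(4) in simp)

lemma homot_crossing_change_sandwich:
  assumes "wf_word W" "wf_word W'" "j \<in> chords W" "j \<in> chords W'" "k j = Cl u"
    and "sv_step (W, k(j := Cl v)) (W', k(j := Cl v))"
  shows "homot (W, k) (W', k)"
proof -
  have "homot (W, k) (W, k(j := Cl v))" using homot_crossing_change assms by blast
  also have "homot \<dots> (W', k(j := Cl v))" using homot_sv_step assms by blast
  also have "homot \<dots> (W', k(j := Cl v, j := Cl u))"
    using homot_crossing_change[of W' j "k(j := Cl v)" v u] assms by simp
  finally show ?thesis using assms(5) by (simp add: fun_upd_idem)
qed

definition rename_chord :: "nat \<Rightarrow> nat \<Rightarrow> letter list \<Rightarrow> letter list" where
  "rename_chord x c w = map (\<lambda>(y, b). (if y = x then c else y, b)) w"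

lemma rename_chord_simps [simp]:
  "rename_chord x c [] = []"
  "rename_chord x c ((y, b) # w) = (if y = x then c else y, b) # rename_chord x c w"
  "rename_chord x c (u @ v) = rename_chord x c u @ rename_chord x c v"
  by (simp_all add: rename_chord_def)

lemma rename_chord_id [simp]: "x \<notin> chords w \<Longrightarrow> rename_chord x c w = w"
  unfolding rename_chord_def by (rule map_idI) (auto dest: in_chordsI)

lemma sv_step_rename_chord:
  assumes "c \<notin> chords w" and "k' c = k x" and "\<forall>y\<in>chords w - {x}. k' y = k y"
  shows "sv_step (w, k) (rename_chord x c w, k')"
proof -
  let ?f = "\<lambda>y. if y = x then c else y"
  have "inj_on ?f (chords w)" using assms(1) by (auto simp: inj_on_def)
  moreover have "\<forall>y\<in>chords w. k' (?f y) = k y" using assms by auto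
  ultimately show ?thesis unfolding rename_chord_def by (rule sv_step.ren)
qed

lemma wf_word_add_two_chords:
  assumes "c \<notin> chords w" "d \<notin> chords w" "c \<noteq> d"
    and "mset w' = mset ((c, b) # (c, \<not> b) # (d, b') # (d, \<not> b') # w)"
  shows "wf_word w' \<longleftrightarrow> wf_word w"
  using assms wf_word_add_chord[of d w "(d, b') # (d, \<not> b') # w" b']
    wf_word_add_chord[of c "(d, b') # (d, \<not> b') # w" w' b] by simp

section \<open>Moving a kink of a double point\<close>

text \<open>A kink of a double point s is a pair of consecutive letters of s. It can be moved past
a classical crossing x: an R2 move creates a bigon next to x, R3 moves the kink into it,
and an inverse R2 move followed by renaming removes the bigon again.\<close>

lemma kink_slide_opposite:
  assumes wf: "wf_word ([(x, \<not> p), (s, p), (s, \<not> p)] @ M1 @ [(x, p)] @ M2)"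
    and ks: "k s = Sg" and kx: "k x = Cl ox"
  shows "homot ([(x, \<not> p), (s, p), (s, \<not> p)] @ M1 @ [(x, p)] @ M2, k)
               ([(s, p), (s, \<not> p), (x, \<not> p)] @ M1 @ [(x, p)] @ M2, k)"
proof -
  define W0 where "W0 = [(x, \<not> p), (s, p), (s, \<not> p)] @ M1 @ [(x, p)] @ M2"
  define ca where "ca = fresh W0"
  define cb where "cb = Suc (fresh W0)"
  have fresh: "ca \<notin> chords W0" "cb \<notin> chords W0" "ca \<noteq> cb"
    using fresh_notin_chords Suc_fresh_notin_chords unfolding ca_def cb_def by auto
  have "distinct W0" using wf unfolding W0_def wf_word_def by blast
  then have xs: "x \<noteq> s" and xsM: "x \<notin> chords M1" "x \<notin> chords M2" "s \<notin> chords M1" "s \<notin> chords M2"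
    unfolding W0_def using notin_chordsI[of x p] notin_chordsI[of s p] by auto
  define k1 where "k1 = k(ca := Cl (\<not> ox), cb := Cl ox)"
  define W1 where
    "W1 = [(x, \<not> p), (s, p), (ca, p), (cb, \<not> p), (s, \<not> p)] @ M1 @ [(x, p), (cb, p), (ca, \<not> p)] @ M2"
  have step1: "sv_step (W0, k) (W1, k1)"
    using sv_step.r2[where c=ca and d=cb and u="[(x, \<not> p), (s, p)]" and v="[(s, \<not> p)] @ M1 @ [(x, p)]"
        and w=M2 and X="[(cb, p), (ca, \<not> p)]" and b=p and k=k and ov="\<not> ox"] fresh
    unfolding W0_def W1_def k1_def by simp
  have wf1: "wf_word W1"
    using wf fresh wf_word_add_two_chords[of ca W0 cb W1 p "\<not> p"] unfolding W0_def W1_def by simp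
  define W2 where
    "W2 = [(s, p), (x, \<not> p), (ca, p), (s, \<not> p), (cb, \<not> p)] @ M1 @ [(cb, p), (x, p), (ca, \<not> p)] @ M2"
  have step2: "sv_step (W1, k1) (W2, k1)"
  proof -
    have "r3_ok k1 [(x, \<not> p), (s, p)] [(cb, \<not> p), (s, \<not> p)] [(x, p), (cb, p)]"
      unfolding r3_ok_def
      by (rule exI[of _ s], rule exI[of _ x], rule exI[of _ cb], rule exI[of _ p], rule exI[of _ "\<not> p"],
          rule exI[of _ p], rule exI[of _ False], rule exI[of _ False], rule exI[of _ True])
        (use xs fresh ks kx in \<open>auto simp: k1_def W0_def\<close>)
    from sv_step.r3[OF this, where A="[]" and B="[(ca, p)]" and C=M1 and D="[(ca, \<not> p)] @ M2"]
    show ?thesis unfolding W1_def W2_def by simp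
  qed
  have wf2: "wf_word W2" by (rule wf_word_mset[OF wf1]) (simp add: W1_def W2_def)
  define k3 where "k3 = k(cb := Cl ox)"
  define W3 where "W3 = [(s, p), (s, \<not> p), (cb, \<not> p)] @ M1 @ [(cb, p)] @ M2"
  have fresh3: "x \<notin> chords W3" "ca \<notin> chords W3" "x \<noteq> ca"
    using xsM xs fresh unfolding W0_def W3_def by auto
  have step3: "sv_step (W3, k3) (W2, k1)"
  proof -
    have "k1 = k3(x := Cl ox, ca := Cl (\<not> ox))"
      using kx fresh unfolding k1_def k3_def W0_def by (auto simp: fun_eq_iff)
    then show ?thesis
      using sv_step.r2[where c=x and d=ca and u="[(s, p)]" and v="[(s, \<not> p), (cb, \<not> p)] @ M1 @ [(cb, p)]"
          and w=M2 and X="[(x, p), (ca, \<not> p)]" and b="\<not> p" and k=k3 and ov=ox] fresh3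
      unfolding W3_def W2_def by auto
  qed
  have wf3: "wf_word W3"
    using wf2 fresh3 wf_word_add_two_chords[of x W3 ca W2 "\<not> p" p] unfolding W2_def W3_def by auto
  define W4 where "W4 = [(s, p), (s, \<not> p), (x, \<not> p)] @ M1 @ [(x, p)] @ M2"
  have step4: "sv_step (W4, k) (W3, k3)"
  proof -
    have "cb \<notin> chords W4" using fresh unfolding W0_def W4_def by auto
    then show ?thesis
      using sv_step_rename_chord[of cb W4 k3 k x] xs xsM kx unfolding W4_def W3_def k3_def by simp
  qed
  have wf4: "wf_word W4" by (rule wf_word_mset[OF wf]) (simp add: W4_def)
  have "homot (W0, k) (W1, k1)" using homot_sv_step wf wf1 step1 unfolding W0_def by blast
  also have "homot \<dots> (W2, k1)" using homot_sv_step[OF wf1 wf2 step2] .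
  also have "homot \<dots> (W3, k3)" using homot_sv_step_rev[OF wf2 wf3 step3] .
  also have "homot \<dots> (W4, k)" using homot_sv_step_rev[OF wf3 wf4 step4] .
  finally show ?thesis unfolding W0_def W4_def .
qed

lemma kink_slide_same:
  assumes wf: "wf_word ([(x, p), (s, p), (s, \<not> p)] @ M1 @ [(x, \<not> p)] @ M2)"
    and ks: "k s = Sg" and kx: "k x = Cl ox"
  shows "homot ([(x, p), (s, p), (s, \<not> p)] @ M1 @ [(x, \<not> p)] @ M2, k)
               ([(s, p), (s, \<not> p), (x, p)] @ M1 @ [(x, \<not> p)] @ M2, k)"
proof -
  define W0 where "W0 = [(x, p), (s, p), (s, \<not> p)] @ M1 @ [(x, \<not> p)] @ M2"
  define ca where "ca = fresh W0"
  define cb where "cb = Suc (fresh W0)"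
  have fresh: "ca \<notin> chords W0" "cb \<notin> chords W0" "ca \<noteq> cb"
    using fresh_notin_chords Suc_fresh_notin_chords unfolding ca_def cb_def by auto
  have "distinct W0" using wf unfolding W0_def wf_word_def by blast
  then have xs: "x \<noteq> s" and xsM: "x \<notin> chords M1" "x \<notin> chords M2" "s \<notin> chords M1" "s \<notin> chords M2"
    unfolding W0_def using notin_chordsI[of x p] notin_chordsI[of s p] by auto
  define k1 where "k1 = k(ca := Cl (\<not> ox), cb := Cl ox)"
  define W1 where
    "W1 = [(x, p), (s, p), (ca, \<not> p), (cb, p), (s, \<not> p)] @ M1 @ [(ca, p), (cb, \<not> p), (x, \<not> p)] @ M2"
  have step1: "sv_step (W0, k) (W1, k1)"
    using sv_step.r2[where c=ca and d=cb and u="[(x, p), (s, p)]" and v="[(s, \<not> p)] @ M1"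
        and w="[(x, \<not> p)] @ M2" and X="[(ca, p), (cb, \<not> p)]" and b="\<not> p" and k=k and ov="\<not> ox"] fresh
    unfolding W0_def W1_def k1_def by simp
  have wf1: "wf_word W1"
    using wf fresh wf_word_add_two_chords[of ca W0 cb W1 "\<not> p" p] unfolding W0_def W1_def by simp
  define W2 where
    "W2 = [(s, p), (x, p), (ca, \<not> p), (s, \<not> p), (cb, p)] @ M1 @ [(ca, p), (x, \<not> p), (cb, \<not> p)] @ M2"
  have step2: "sv_step (W1, k1) (W2, k1)"
  proof -
    have "r3_ok k1 [(x, p), (s, p)] [(cb, p), (s, \<not> p)] [(cb, \<not> p), (x, \<not> p)]"
      unfolding r3_ok_def
      by (rule exI[of _ s], rule exI[of _ x], rule exI[of _ cb], rule exI[of _ p], rule exI[of _ p],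
          rule exI[of _ "\<not> p"], rule exI[of _ False], rule exI[of _ False], rule exI[of _ False])
        (use xs fresh ks kx in \<open>auto simp: k1_def W0_def\<close>)
    from sv_step.r3[OF this, where A="[]" and B="[(ca, \<not> p)]" and C="M1 @ [(ca, p)]" and D=M2]
    show ?thesis unfolding W1_def W2_def by simp
  qed
  have wf2: "wf_word W2" by (rule wf_word_mset[OF wf1]) (simp add: W1_def W2_def)
  define k3 where "k3 = k(cb := Cl ox)"
  define W3 where "W3 = [(s, p), (s, \<not> p), (cb, p)] @ M1 @ [(cb, \<not> p)] @ M2"
  have fresh3: "x \<notin> chords W3" "ca \<notin> chords W3" "x \<noteq> ca"
    using xsM xs fresh unfolding W0_def W3_def by auto
  have step3: "sv_step (W3, k3) (W2, k1)"
  proof -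
    have "k1 = k3(x := Cl ox, ca := Cl (\<not> ox))"
      using kx fresh unfolding k1_def k3_def W0_def by (auto simp: fun_eq_iff)
    then show ?thesis
      using sv_step.r2[where c=x and d=ca and u="[(s, p)]" and v="[(s, \<not> p), (cb, p)] @ M1"
          and w="[(cb, \<not> p)] @ M2" and X="[(ca, p), (x, \<not> p)]" and b=p and k=k3 and ov=ox] fresh3
      unfolding W3_def W2_def by auto
  qed
  have wf3: "wf_word W3"
    using wf2 fresh3 wf_word_add_two_chords[of x W3 ca W2 p "\<not> p"] unfolding W2_def W3_def by auto
  define W4 where "W4 = [(s, p), (s, \<not> p), (x, p)] @ M1 @ [(x, \<not> p)] @ M2"
  have step4: "sv_step (W4, k) (W3, k3)"
  proof -
    have "cb \<notin> chords W4" using fresh unfolding W0_def W4_def by auto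
    then show ?thesis
      using sv_step_rename_chord[of cb W4 k3 k x] xs xsM kx unfolding W4_def W3_def k3_def by simp
  qed
  have wf4: "wf_word W4" by (rule wf_word_mset[OF wf]) (simp add: W4_def)
  have "homot (W0, k) (W1, k1)" using homot_sv_step wf wf1 step1 unfolding W0_def by blast
  also have "homot \<dots> (W2, k1)" using homot_sv_step[OF wf1 wf2 step2] .
  also have "homot \<dots> (W3, k3)" using homot_sv_step_rev[OF wf2 wf3 step3] .
  also have "homot \<dots> (W4, k)" using homot_sv_step_rev[OF wf3 wf4 step4] .
  finally show ?thesis unfolding W0_def W4_def .
qed

lemma kink_slide:
  assumes "wf_word (P @ [(x, \<beta>), (s, p), (s, \<not> p)] @ Q)"
    and ks: "k s = Sg" and kx: "k x = Cl ox"
  shows "homot (P @ [(x, \<beta>), (s, p), (s, \<not> p)] @ Q, k) (P @ [(s, p), (s, \<not> p), (x, \<beta>)] @ Q, k)"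
proof -
  have wf: "wf_word ([(x, \<beta>), (s, p), (s, \<not> p)] @ Q @ P)"
    using assms(1) wf_word_rotate[of P] by simp
  then have "(x, \<not> \<beta>) \<in> set (Q @ P)"
    using wf_word_flip[OF wf, of x \<beta>] unfolding wf_word_def by auto
  then obtain M1 M2 where QP: "Q @ P = M1 @ [(x, \<not> \<beta>)] @ M2"
    by (metis append_Cons append_Nil split_list)
  have slide: "homot ([(x, \<beta>), (s, p), (s, \<not> p)] @ M1 @ [(x, \<not> \<beta>)] @ M2, k)
      ([(s, p), (s, \<not> p), (x, \<beta>)] @ M1 @ [(x, \<not> \<beta>)] @ M2, k)"
  proof (cases "\<beta> = p")
    case True
    then show ?thesis using kink_slide_same[OF _ ks kx] wf QP by simp
  next
    case False
    then have "\<beta> = (\<not> p)" by simp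
    then show ?thesis using kink_slide_opposite[OF _ ks kx] wf QP by simp
  qed
  have "homot (P @ [(x, \<beta>), (s, p), (s, \<not> p)] @ Q, k) ([(x, \<beta>), (s, p), (s, \<not> p)] @ Q @ P, k)"
    using homot_rotate[of P "[(x, \<beta>), (s, p), (s, \<not> p)] @ Q"] assms(1) by simp
  also have "homot \<dots> ([(s, p), (s, \<not> p), (x, \<beta>)] @ Q @ P, k)"
    using slide QP by simp
  also have "homot \<dots> (P @ [(s, p), (s, \<not> p), (x, \<beta>)] @ Q, k)"
    using homot_rotate[of "[(s, p), (s, \<not> p), (x, \<beta>)] @ Q" P] wf_word_mset[OF wf] by simp
  finally show ?thesis .
qed

lemma kink_slide_past:
  assumes "wf_word (P @ L @ [(s, p), (s, \<not> p)] @ Q)"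
    and ks: "k s = Sg" and kL: "\<forall>l\<in>set L. \<exists>o'. k (fst l) = Cl o'"
  shows "homot (P @ L @ [(s, p), (s, \<not> p)] @ Q, k) (P @ [(s, p), (s, \<not> p)] @ L @ Q, k)"
  using assms(1) kL
proof (induction L arbitrary: Q rule: rev_induct)
  case (snoc l L)
  obtain x \<beta> where l: "l = (x, \<beta>)" by fastforce
  obtain ox where kx: "k x = Cl ox" using snoc.prems l by auto
  have "homot ((P @ L) @ [(x, \<beta>), (s, p), (s, \<not> p)] @ Q, k) ((P @ L) @ [(s, p), (s, \<not> p), (x, \<beta>)] @ Q, k)"
    by (rule kink_slide[OF _ ks kx]) (use snoc.prems l in simp)
  also have "homot \<dots> (P @ [(s, p), (s, \<not> p)] @ L @ ([l] @ Q), k)"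
    using snoc.IH[of "[l] @ Q"] snoc.prems wf_word_mset[OF snoc.prems(1)] l by simp
  finally show ?case using l by simp
qed simp

text \<open>Reversing a kink: add a classical kink next to it, rotate the double point across that
crossing, slide it out, and remove the classical kink.\<close>

lemma kink_flip:
  assumes wf: "wf_word (P @ [(s, p), (s, \<not> p)] @ Q)" and ks: "k s = Sg"
  shows "homot (P @ [(s, p), (s, \<not> p)] @ Q, k) (P @ [(s, \<not> p), (s, p)] @ Q, k)"
proof -
  define W where "W = P @ [(s, p), (s, \<not> p)] @ Q"
  define c where "c = fresh W"
  have c: "c \<notin> chords W" unfolding c_def by (rule fresh_notin_chords)
  have cs: "c \<noteq> s" using c W_def by auto
  define k1 where "k1 = k(c := Cl True)"
  have k1: "k1 s = Sg" "k1 c = Cl True" using ks cs by (auto simp: k1_def)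
  define W1 where "W1 = P @ [(s, p), (c, \<not> p), (c, p), (s, \<not> p)] @ Q"
  have wf1: "wf_word W1"
    using wf c wf_word_add_chord[of c W W1 p] unfolding W_def W1_def by simp
  have step1: "sv_step (W, k) (W1, k1)"
    using sv_step.r1[where c=c and u="P @ [(s, p)]" and v="(s, \<not> p) # Q" and b="\<not> p" and k=k and ov=True] c
    unfolding W_def W1_def k1_def by simp
  define W2 where "W2 = P @ [(c, p), (s, \<not> p), (s, p), (c, \<not> p)] @ Q"
  have step2: "sv_step (W1, k1) (W2, k1)"
  proof -
    have "rot_ok k1 [(s, p), (c, \<not> p)] [(c, p), (s, \<not> p)]"
      unfolding rot_ok_def using cs k1 by blast
    from sv_step.rotv[OF this, where A=P and B="[]" and C=Q]
    show ?thesis unfolding W1_def W2_def by (simp add: flipl_def)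
  qed
  have wf2: "wf_word W2" by (rule wf_word_mset[OF wf1]) (auto simp: W1_def W2_def)
  define W3 where "W3 = P @ [(s, \<not> p), (s, p)] @ Q"
  have step3: "sv_step (W3, k) (P @ [(s, \<not> p), (s, p), (c, p), (c, \<not> p)] @ Q, k1)"
    using sv_step.r1[where c=c and u="P @ [(s, \<not> p), (s, p)]" and v=Q and b=p and k=k and ov=True] c
    unfolding W_def W3_def k1_def by simp
  have "homot (W, k) (W1, k1)" using homot_sv_step[OF _ wf1 step1] wf W_def by simp
  also have "homot \<dots> (W2, k1)" using homot_sv_step[OF wf1 wf2 step2] .
  also have "homot \<dots> (P @ [(s, \<not> p), (s, p), (c, p), (c, \<not> p)] @ Q, k1)"
    using kink_slide[of P c p s "\<not> p" "[(c, \<not> p)] @ Q", OF _ k1] wf2 unfolding W2_def by simp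
  also have "homot \<dots> (W3, k)"
    using homot_sv_step_rev[OF _ _ step3] wf_word_mset[OF wf2] wf_word_mset[OF wf]
    unfolding W2_def W3_def by simp
  finally show ?thesis unfolding W_def W3_def .
qed

lemma kink_to_front:
  assumes "wf_word (P @ [(s, p), (s, \<not> p)] @ Q)" and ks: "k s = Sg"
    and kP: "\<forall>l\<in>set P. \<exists>o'. k (fst l) = Cl o'"
  shows "homot (P @ [(s, p), (s, \<not> p)] @ Q, k) ([(s, True), (s, False)] @ P @ Q, k)"
proof -
  have wf: "wf_word ([] @ [(s, p), (s, \<not> p)] @ P @ Q)"
    by (rule wf_word_mset[OF assms(1)]) auto
  have "homot (P @ [(s, p), (s, \<not> p)] @ Q, k) ([(s, p), (s, \<not> p)] @ P @ Q, k)"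
    using kink_slide_past[of "[]" P s p Q k] assms by simp
  also have "homot \<dots> ([(s, True), (s, False)] @ P @ Q, k)"
    using kink_flip[of "[]" s p "P @ Q" k] wf ks by (cases p) auto
  finally show ?thesis .
qed

section \<open>Double points and gluings\<close>

lemma sing_chords_conv: "sing_chords (w, k) = {c \<in> chords w. k c = Sg}"
  by (simp add: sing_chords_def)

lemma finite_sing_chords [simp]: "finite (sing_chords d)"
  by (simp add: sing_chords_def)

lemma nsing_eq_0_iff: "nsing d = 0 \<longleftrightarrow> sing_chords d = {}"
  unfolding nsing_def by simp

lemma Cl_if_no_sing: "sing_chords (w, k) = {} \<Longrightarrow> c \<in> chords w \<Longrightarrow> \<exists>ov. k c = Cl ov"
  by (cases "k c") (auto simp: sing_chords_conv)

lemma sv_step_sing_chords: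
  "sv_step x y \<Longrightarrow> \<exists>g. inj_on g (sing_chords x) \<and> sing_chords y = g ` sing_chords x"
proof (induction rule: sv_step.induct)
  case (ren f w k' k)
  then have "sing_chords (map (\<lambda>(c, b). (f c, b)) w, k') = f ` sing_chords (w, k)"
    by (auto simp: sing_chords_conv chords_rename image_iff)
  moreover have "inj_on f (sing_chords (w, k))"
    using ren.hyps(1) by (rule inj_on_subset) (auto simp: sing_chords_conv)
  ultimately show ?case by blast
next
  case (r2 c u v w d X b k ov)
  then show ?case by (intro exI[of _ id]) (auto simp: sing_chords_conv)
qed (intro exI[of _ id], auto simp: sing_chords_conv)+

lemma cc_step_sing_chords: "cc_step x y \<Longrightarrow> sing_chords y = sing_chords x"
  by (induction rule: cc_step.induct) (auto simp: sing_chords_conv)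

lemma nsing_homot_step: "sv_step x y \<or> cc_step x y \<Longrightarrow> nsing y = nsing x"
  unfolding nsing_def using sv_step_sing_chords cc_step_sing_chords by (metis card_image)

lemma homot_preserves:
  assumes "homot x y"
    and "\<And>x y. wf_gd x \<Longrightarrow> wf_gd y \<Longrightarrow> sv_step x y \<or> cc_step x y \<Longrightarrow> P x \<longleftrightarrow> P y"
    and "\<And>x y. wf_gd x \<Longrightarrow> wf_gd y \<Longrightarrow> sv_step x y \<or> cc_step x y \<Longrightarrow> P x \<Longrightarrow> P y \<Longrightarrow> f x = f y"
    and "P x"
  shows "P y \<and> f x = f y"
  using assms(1) unfolding homot_def by (rule equivclp_preserves) (use assms(2-4) in auto)

lemma homot_is_vdiag:
  assumes "homot x y" "is_vdiag x"
  shows "is_vdiag y"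
proof -
  have "nsing x = nsing y \<Longrightarrow> is_vdiag x \<longleftrightarrow> is_vdiag y" if "wf_gd x" "wf_gd y" for x y
    using that unfolding is_vdiag_def by (simp add: nsing_eq_0_iff[symmetric])
  then show ?thesis
    using homot_preserves[where P=is_vdiag and f="\<lambda>_. ()", OF assms(1) _ _ assms(2)] nsing_homot_step
    by (metis (no_types))
qed

definition sing_kink :: "nat \<Rightarrow> gd \<Rightarrow> gd" where
  "sing_kink g d = ((g, True) # (g, False) # fst d, (snd d)(g := Sg))"

lemma sing0_eq_sing_kink: "sing0 d = sing_kink (fresh (fst d)) d"
  by (simp add: sing0_def sing_kink_def)

lemma glue_pair [simp]: "glue (w, k) c = (w, k(c := Sg))"
  by (simp add: glue_def)

lemma homot_sing0_sing_kink:
  assumes wf: "wf_word w" and g: "g \<notin> chords w"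
  shows "homot (sing0 (w, k)) (sing_kink g (w, k))"
proof -
  define f where "f = fresh w"
  have f: "f \<notin> chords w" unfolding f_def by (rule fresh_notin_chords)
  show ?thesis
  proof (cases "g = f")
    case True
    then show ?thesis by (simp add: sing0_eq_sing_kink f_def)
  next
    case False
    have "sv_step ((f, True) # (f, False) # w, k(f := Sg))
        (rename_chord f g ((f, True) # (f, False) # w), k(g := Sg))"
      by (rule sv_step_rename_chord) (use f g False in auto)
    then show ?thesis
      unfolding sing0_eq_sing_kink sing_kink_def f_def[symmetric]
      using f False homot_sv_step wf_word_kink[OF wf f, of True] wf_word_kink[OF wf g, of True]
      by (simp add: f_def)
  qed
qed

lemma hclass_sing0_eqI:
  assumes "wf_word w" "wf_word w'" "g \<notin> chords w" "g \<notin> chords w'"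
    and "homot (sing_kink g (w, k)) (sing_kink g (w', k'))"
  shows "hclass (sing0 (w, k)) = hclass (sing0 (w', k'))"
  using assms homot_sing0_sing_kink homot_sym homot_trans hclass_eq_iff by meson

text \<open>Gluing either crossing of an R2 bigon gives homotopic diagrams: rotate the double point
across the other crossing, swap the names of the two chords and change the remaining crossing.\<close>

lemma homot_glue_r2_bigon:
  assumes wf: "wf_word (u @ [(c, b), (d, \<not> b)] @ v @ X @ w)"
    and X: "X \<in> {[(c, \<not> b), (d, b)], [(d, b), (c, \<not> b)]}"
  shows "homot (u @ [(c, b), (d, \<not> b)] @ v @ X @ w, k(c := Sg, d := Cl (\<not> ov)))
               (u @ [(c, b), (d, \<not> b)] @ v @ X @ w, k(c := Cl ov, d := Sg))"
proof -
  define W where "W = u @ [(c, b), (d, \<not> b)] @ v @ X @ w"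
  have dW: "distinct W" using wf W_def wf_word_def by blast
  have cd: "c \<noteq> d" using dW X W_def by auto
  have cd_notin: "c \<notin> chords (u @ v @ w)" "d \<notin> chords (u @ v @ w)"
    using dW X notin_chordsI[of c b] notin_chordsI[of d b] unfolding W_def by auto
  define k1 where "k1 = k(c := Sg, d := Cl (\<not> ov))"
  define W2 where "W2 = u @ rev (map flipl [(c, b), (d, \<not> b)]) @ v @ rev (map flipl X) @ w"
  have step1: "sv_step (W, k1) (W2, k1)"
  proof -
    have "rot_ok k1 [(c, b), (d, \<not> b)] X"
      unfolding rot_ok_def
      by (rule exI[of _ d], rule exI[of _ c], rule exI[of _ "\<not> b"], rule exI[of _ "\<not> ov"])
        (use cd X in \<open>auto simp: k1_def\<close>)
    from sv_step.rotv[OF this, where A=u and B=v and C=w] show ?thesis unfolding W_def W2_def by simp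
  qed
  have wf2: "wf_word W2"
    by (rule wf_word_mset[OF wf]) (use X in \<open>auto simp: W2_def flipl_def\<close>)
  define sw :: "nat \<Rightarrow> nat" where "sw = id(c := d, d := c)"
  define k2 where "k2 = k(c := Cl (\<not> ov), d := Sg)"
  have step2: "sv_step (W2, k1) (W, k2)"
  proof -
    have "map (\<lambda>(x, y). (sw x, y)) L = L" if "c \<notin> chords L" "d \<notin> chords L" for L
      using that by (auto intro!: map_idI simp: sw_def dest: in_chordsI)
    then have "map (\<lambda>(x, y). (sw x, y)) W2 = W"
      using cd_notin X cd unfolding W2_def W_def by (auto simp: sw_def flipl_def)
    moreover have "inj_on sw (chords W2)" by (auto simp: sw_def inj_on_def)
    moreover have "\<forall>x\<in>chords W2. k2 (sw x) = k1 x" using cd by (auto simp: sw_def k1_def k2_def)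
    ultimately show ?thesis using sv_step.ren by metis
  qed
  have "homot (W, k1) (W2, k1)" using homot_sv_step[OF _ wf2 step1] wf W_def by simp
  also have "homot \<dots> (W, k2)" using homot_sv_step[OF wf2 _ step2] wf W_def by simp
  also have "homot \<dots> (W, k2(c := Cl ov))"
    by (rule homot_crossing_change) (use wf in \<open>auto simp: W_def k2_def cd\<close>)
  finally show ?thesis using cd unfolding W_def k1_def k2_def by (simp add: fun_upd_twist)
qed

lemma r3_okE:
  assumes "r3_ok k X Y Z"
  obtains a b c s12 s23 s31 o1 o2 o3 where "distinct [a, b, c]"
    "X = (if o1 then [(a, s12), (b, \<not> s31)] else [(b, \<not> s31), (a, s12)])"
    "Y = (if o2 then [(a, \<not> s12), (c, s23)] else [(c, s23), (a, \<not> s12)])"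
    "Z = (if o3 then [(b, s31), (c, \<not> s23)] else [(c, \<not> s23), (b, s31)])"
    "(o1 = o3) = (s12 = s23)" "(o2 = o3) = (s31 \<noteq> s12)"
    "r3_kinds (k a) (k b) (k c) s12 s23 s31"
  using assms unfolding r3_ok_def by blast

lemma r3_ok_kinds_cong:
  assumes "r3_ok k X Y Z" "\<forall>c\<in>chords (X @ Y). k' c = k c"
  shows "r3_ok k' X Y Z"
  using assms(1)
proof (rule r3_okE)
  fix a b c s12 s23 s31 o1 o2 o3
  assume h: "distinct [a, b, c]"
    "X = (if o1 then [(a, s12), (b, \<not> s31)] else [(b, \<not> s31), (a, s12)])"
    "Y = (if o2 then [(a, \<not> s12), (c, s23)] else [(c, s23), (a, \<not> s12)])"
    "Z = (if o3 then [(b, s31), (c, \<not> s23)] else [(c, \<not> s23), (b, s31)])"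
    "(o1 = o3) = (s12 = s23)" "(o2 = o3) = (s31 \<noteq> s12)"
    "r3_kinds (k a) (k b) (k c) s12 s23 s31"
  have "k' a = k a" "k' b = k b" "k' c = k c" using assms(2) h(2,3) by (auto split: if_splits)
  then have "r3_kinds (k' a) (k' b) (k' c) s12 s23 s31" using h(7) by simp
  then show ?thesis using h(1-6) unfolding r3_ok_def by blast
qed

text \<open>Gluing a crossing of an R3 triangle: the R3 move stays available after changing
one of the two other crossings of the triangle.\<close>

lemma homot_glue_r3:
  assumes r3: "r3_ok k X Y Z"
    and wf: "wf_word (A @ X @ B @ Y @ C @ Z @ D)" "wf_word (A @ rev X @ B @ rev Y @ C @ rev Z @ D)"
    and cl: "sing_chords (A @ X @ B @ Y @ C @ Z @ D, k) = {}"
    and x: "x \<in> chords (A @ X @ B @ Y @ C @ Z @ D)"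
  shows "homot (A @ X @ B @ Y @ C @ Z @ D, k(x := Sg)) (A @ rev X @ B @ rev Y @ C @ rev Z @ D, k(x := Sg))"
  using r3
proof (rule r3_okE)
  define W where "W = A @ X @ B @ Y @ C @ Z @ D"
  define W' where "W' = A @ rev X @ B @ rev Y @ C @ rev Z @ D"
  fix a b c s12 s23 s31 o1 o2 o3
  assume h: "distinct [a, b, c]"
    "X = (if o1 then [(a, s12), (b, \<not> s31)] else [(b, \<not> s31), (a, s12)])"
    "Y = (if o2 then [(a, \<not> s12), (c, s23)] else [(c, s23), (a, \<not> s12)])"
    "Z = (if o3 then [(b, s31), (c, \<not> s23)] else [(c, \<not> s23), (b, s31)])"
    "(o1 = o3) = (s12 = s23)" "(o2 = o3) = (s31 \<noteq> s12)"
    "r3_kinds (k a) (k b) (k c) s12 s23 s31"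
  have abc: "a \<in> chords W" "b \<in> chords W" "c \<in> chords W" "a \<in> chords W'" "b \<in> chords W'" "c \<in> chords W'"
    using h(2,3) unfolding W_def W'_def by (auto split: if_splits)
  obtain oa ob oc where ko: "k a = Cl oa" "k b = Cl ob" "k c = Cl oc"
    using abc cl Cl_if_no_sing unfolding W_def by metis
  have wfW: "wf_word W" "wf_word W'" using wf W_def W'_def by auto
  have step: "\<And>K. r3_ok K X Y Z \<Longrightarrow> sv_step (W, K) (W', K)"
    unfolding W_def W'_def by (rule sv_step.r3)
  have r3I: "r3_kinds (K a) (K b) (K c) s12 s23 s31 \<Longrightarrow> r3_ok K X Y Z" for K
    using h(1-6) unfolding r3_ok_def by blast
  consider "x \<notin> {a, b, c}" | "x = a" | "x = b" | "x = c" by blast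
  then have "homot (W, k(x := Sg)) (W', k(x := Sg))"
  proof cases
    case 1
    have "r3_ok (k(x := Sg)) X Y Z"
      by (rule r3_ok_kinds_cong[OF r3]) (use 1 h(2,3) in \<open>auto split: if_splits\<close>)
    then show ?thesis using homot_sv_step[OF wfW] step by blast
  next
    case 2
    have "r3_ok (k(x := Sg, b := Cl (s31 = (\<not> (s23 = oc))))) X Y Z"
      by (rule r3I) (use 2 h(1) ko in auto)
    then show ?thesis
      using homot_crossing_change_sandwich[OF wfW abc(2) abc(5), of "k(x := Sg)" ob] step 2 h(1) ko by auto
  next
    case 3
    have "r3_ok (k(x := Sg, a := Cl (s12 = (\<not> (s23 = oc))))) X Y Z"
      by (rule r3I) (use 3 h(1) ko in auto)
    then show ?thesis
      using homot_crossing_change_sandwich[OF wfW abc(1) abc(4), of "k(x := Sg)" oa] step 3 h(1) ko by auto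
  next
    case 4
    have "r3_ok (k(x := Sg, a := Cl (s12 = (\<not> (s31 = ob))))) X Y Z"
      by (rule r3I) (use 4 h(1) ko in auto)
    then show ?thesis
      using homot_crossing_change_sandwich[OF wfW abc(1) abc(4), of "k(x := Sg)" oa] step 4 h(1) ko by auto
  qed
  then show ?thesis unfolding W_def W'_def .
qed

section \<open>Invariance of the gluing invariant\<close>

definition gluing_term :: "gd \<Rightarrow> nat \<Rightarrow> gd set \<Rightarrow> int" where
  "gluing_term d c h = sgn_ck (snd d c) *
     ((if h = hclass (glue d c) then 1 else 0) - (if h = hclass (sing0 d) then 1 else 0))"

lemma Gl_eq_sum_gluing_term:
  "sing_chords (w, k) = {} \<Longrightarrow> Gl (w, k) h = (\<Sum>c\<in>chords w. gluing_term (w, k) c h)"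
  unfolding Gl_def gluing_term_def by (rule sum.cong) (auto simp: sing_chords_conv)

lemma gluing_term_eqI:
  assumes "k' x' = k x" and "homot (w, k(x := Sg)) (w', k'(x' := Sg))"
    and "hclass (sing0 (w, k)) = hclass (sing0 (w', k'))"
  shows "gluing_term (w', k') x' h = gluing_term (w, k) x h"
proof -
  have "hclass (w', k'(x' := Sg)) = hclass (w, k(x := Sg))"
    using assms(2) hclass_eq_iff homot_sym by metis
  then show ?thesis using assms(1,3) unfolding gluing_term_def by simp
qed

lemma sing_chords_sing_kink:
  "sing_chords (w, k) = {} \<Longrightarrow> g \<notin> chords w \<Longrightarrow> sing_chords (sing_kink g (w, k)) = {g}"
  by (auto simp: sing_kink_def sing_chords_conv)

lemma Gl_cong:
  assumes "sing_chords (w, k) = {}" "sing_chords (w', k') = {}" "chords w = chords w'"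
    and "\<And>c. c \<in> chords w \<Longrightarrow> k' c = k c \<and> hclass (w, k(c := Sg)) = hclass (w', k'(c := Sg))"
    and "hclass (sing0 (w, k)) = hclass (sing0 (w', k'))"
  shows "Gl (w, k) = Gl (w', k')"
proof
  fix h
  show "Gl (w, k) h = Gl (w', k') h"
    unfolding Gl_eq_sum_gluing_term[OF assms(1)] Gl_eq_sum_gluing_term[OF assms(2)] assms(3)[symmetric]
    by (rule sum.cong) (use assms(4,5) in \<open>auto simp: gluing_term_def\<close>)
qed

lemma Gl_rotate:
  assumes wf: "wf_word (u @ v)" and cl: "sing_chords (u @ v, k) = {}"
  shows "Gl (u @ v, k) = Gl (v @ u, k)"
proof (rule Gl_cong[OF cl])
  show "sing_chords (v @ u, k) = {}" using cl by (auto simp: sing_chords_conv)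
  show "chords (u @ v) = chords (v @ u)" by auto
  show "k c = k c \<and> hclass (u @ v, k(c := Sg)) = hclass (v @ u, k(c := Sg))" for c
    using homot_rotate[OF wf] hclass_eq_iff by simp
  define g where "g = fresh (u @ v)"
  have g: "g \<notin> chords (u @ v)" unfolding g_def by (rule fresh_notin_chords)
  have wf_kink: "wf_word (u @ [(g, True), (g, False)] @ v)"
    by (rule wf_word_mset[OF wf_word_kink[OF wf g, of True]]) auto
  have "\<forall>l\<in>set u. \<exists>o'. (k(g := Sg)) (fst l) = Cl o'"
  proof
    fix l assume "l \<in> set u"
    then have "fst l \<in> chords (u @ v)" by (auto simp: chords_def)
    then show "\<exists>o'. (k(g := Sg)) (fst l) = Cl o'" using g Cl_if_no_sing[OF cl] by auto
  qed
  then have "homot (u @ [(g, True), (g, False)] @ v, k(g := Sg)) ([(g, True), (g, False)] @ u @ v, k(g := Sg))"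
    using kink_to_front[of u g True v "k(g := Sg)"] wf_kink by simp
  with homot_rotate[of "[(g, True), (g, False)] @ v" u] wf_word_mset[OF wf_kink]
  have "homot ([(g, True), (g, False)] @ v @ u, k(g := Sg)) ([(g, True), (g, False)] @ u @ v, k(g := Sg))"
    using homot_trans by fastforce
  then show "hclass (sing0 (u @ v, k)) = hclass (sing0 (v @ u, k))"
    using hclass_sing0_eqI[of "u @ v" "v @ u" g k k] g wf wf_word_rotate homot_sym
    by (simp add: sing_kink_def)
qed

lemma Gl_rename:
  assumes wf: "wf_word w" "wf_word (map (\<lambda>(c, b). (f c, b)) w)" and inj: "inj_on f (chords w)"
    and kk: "\<forall>c\<in>chords w. k' (f c) = k c" and cl: "sing_chords (w, k) = {}"
  shows "Gl (w, k) = Gl (map (\<lambda>(c, b). (f c, b)) w, k')"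
proof
  fix h
  define w' where "w' = map (\<lambda>(c, b). (f c, b)) w"
  have cw': "chords w' = f ` chords w" unfolding w'_def by (rule chords_rename)
  have cl': "sing_chords (w', k') = {}" using cl kk cw' by (auto simp: sing_chords_conv)
  define f0 where "f0 = fresh w"
  define f1 where "f1 = fresh w'"
  have f0: "f0 \<notin> chords w" unfolding f0_def by (rule fresh_notin_chords)
  have f1: "f1 \<notin> chords w'" unfolding f1_def by (rule fresh_notin_chords)
  have sing0: "hclass (sing0 (w', k')) = hclass (sing0 (w, k))"
  proof -
    define g where "g = f(f0 := f1)"
    have "map (\<lambda>(c, b). (g c, b)) w = w'"
      unfolding w'_def g_def using f0 by (auto intro!: map_cong dest: in_chordsI)
    then have "map (\<lambda>(c, b). (g c, b)) ((f0, True) # (f0, False) # w) = (f1, True) # (f1, False) # w'"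
      by (simp add: g_def)
    moreover have "inj_on g (chords ((f0, True) # (f0, False) # w))"
      using inj f0 f1 cw' unfolding g_def inj_on_def by (auto simp: image_iff)
    moreover have "\<forall>c\<in>chords ((f0, True) # (f0, False) # w). (k'(f1 := Sg)) (g c) = (k(f0 := Sg)) c"
      using f0 f1 kk cw' by (auto simp: g_def)
    ultimately have "sv_step (sing0 (w, k)) (sing0 (w', k'))"
      unfolding sing0_def f0_def f1_def using sv_step.ren by (metis fst_conv snd_conv)
    then show ?thesis
      using homot_sv_step wf_word_kink[OF wf(1) f0, of True] wf_word_kink[OF wf(2)[folded w'_def] f1, of True]
      unfolding sing0_def f0_def f1_def by (simp add: hclass_eq_iff homot_sym)
  qed
  have "gluing_term (w', k') (f c) h = gluing_term (w, k) c h" if c: "c \<in> chords w" for c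
  proof (rule gluing_term_eqI[OF _ _ sing0[symmetric]])
    show "k' (f c) = k c" using kk c by simp
    have "\<forall>x\<in>chords w. (k'(f c := Sg)) (f x) = (k(c := Sg)) x"
      using kk inj c by (auto simp: inj_on_def)
    from sv_step.ren[OF inj this] show "homot (w, k(c := Sg)) (w', k'(f c := Sg))"
      using homot_sv_step wf w'_def by blast
  qed
  then have "Gl (w', k') h = Gl (w, k) h"
    unfolding Gl_eq_sum_gluing_term[OF cl'] Gl_eq_sum_gluing_term[OF cl] cw'
    by (simp add: sum.reindex[OF inj])
  then show "Gl (w, k) h = Gl (map (\<lambda>(c, b). (f c, b)) w, k') h" unfolding w'_def by simp
qed

lemma Gl_r1:
  assumes wf: "wf_word (u @ v)" "wf_word (u @ [(c, b), (c, \<not> b)] @ v)" and c: "c \<notin> chords (u @ v)"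
    and cl: "sing_chords (u @ v, k) = {}"
  shows "Gl (u @ v, k) = Gl (u @ [(c, b), (c, \<not> b)] @ v, k(c := Cl ov))"
proof
  fix h
  define W' where "W' = u @ [(c, b), (c, \<not> b)] @ v"
  define K' where "K' = k(c := Cl ov)"
  have cl': "sing_chords (W', K') = {}" using cl unfolding W'_def K'_def by (auto simp: sing_chords_conv)
  have cW: "chords W' = insert c (chords (u @ v))" unfolding W'_def by auto
  define g where "g = fresh W'"
  have g: "g \<notin> chords W'" unfolding g_def by (rule fresh_notin_chords)
  then have g': "g \<notin> chords (u @ v)" "g \<noteq> c" using cW by auto
  have sing0: "hclass (sing0 (u @ v, k)) = hclass (sing0 (W', K'))"
  proof (rule hclass_sing0_eqI[OF wf(1) wf(2)[folded W'_def] g'(1) g])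
    have "sv_step (((g, True) # (g, False) # u) @ v, k(g := Sg))
                  (((g, True) # (g, False) # u) @ [(c, b), (c, \<not> b)] @ v, k(g := Sg, c := Cl ov))"
      by (rule sv_step.r1) (use c g' in auto)
    moreover have "k(g := Sg, c := Cl ov) = K'(g := Sg)" unfolding K'_def using g' by (auto simp: fun_eq_iff)
    ultimately show "homot (sing_kink g (u @ v, k)) (sing_kink g (W', K'))"
      using homot_sv_step wf_word_kink[OF wf(1) g'(1), of True] wf_word_kink[OF wf(2)[folded W'_def] g, of True]
      unfolding W'_def sing_kink_def by auto
  qed
  have "homot (sing0 (u @ v, k)) (sing_kink c (u @ v, k))"
    by (rule homot_sing0_sing_kink[OF wf(1) c])
  moreover have "homot (W', k(c := Sg)) ([(c, True), (c, False)] @ u @ v, k(c := Sg))"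
  proof -
    have "\<forall>l\<in>set u. \<exists>o'. (k(c := Sg)) (fst l) = Cl o'"
    proof
      fix l assume "l \<in> set u"
      then have "fst l \<in> chords (u @ v)" by (auto simp: chords_def)
      then show "\<exists>o'. (k(c := Sg)) (fst l) = Cl o'" using c Cl_if_no_sing[OF cl] by auto
    qed
    then show ?thesis using kink_to_front[of u c b v "k(c := Sg)"] wf(2) unfolding W'_def by simp
  qed
  ultimately have glue_c: "hclass (W', K'(c := Sg)) = hclass (sing0 (u @ v, k))"
    unfolding K'_def sing_kink_def by (simp add: hclass_eq_iff) (metis homot_sym homot_trans)
  have "gluing_term (W', K') x h = gluing_term (u @ v, k) x h" if x: "x \<in> chords (u @ v)" for x
  proof (rule gluing_term_eqI[OF _ _ sing0])
    have xc: "x \<noteq> c" using x c by auto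
    then show "K' x = k x" unfolding K'_def by simp
    have "sv_step (u @ v, k(x := Sg)) (W', k(x := Sg, c := Cl ov))"
      unfolding W'_def by (rule sv_step.r1) (use c in auto)
    moreover have "k(x := Sg, c := Cl ov) = K'(x := Sg)" unfolding K'_def using xc by (auto simp: fun_eq_iff)
    ultimately show "homot (u @ v, k(x := Sg)) (W', K'(x := Sg))"
      using homot_sv_step[OF wf(1) wf(2)[folded W'_def]] by simp
  qed
  moreover have "gluing_term (W', K') c h = 0" unfolding gluing_term_def using glue_c sing0 by simp
  ultimately have "Gl (W', K') h = Gl (u @ v, k) h"
    unfolding Gl_eq_sum_gluing_term[OF cl'] Gl_eq_sum_gluing_term[OF cl] cW using c by simp
  then show "Gl (u @ v, k) h = Gl (u @ [(c, b), (c, \<not> b)] @ v, k(c := Cl ov)) h"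
    unfolding W'_def K'_def by simp
qed

text \<open>The two new crossings of an R2 move have opposite signs and homotopic gluings.\<close>

lemma Gl_r2:
  assumes wf: "wf_word (u @ v @ w)" "wf_word (u @ [(c, b), (d, \<not> b)] @ v @ X @ w)"
    and c: "c \<notin> chords (u @ v @ w)" "d \<notin> chords (u @ v @ w)" "c \<noteq> d"
    and X: "X \<in> {[(c, \<not> b), (d, b)], [(d, b), (c, \<not> b)]}"
    and cl: "sing_chords (u @ v @ w, k) = {}"
  shows "Gl (u @ v @ w, k) = Gl (u @ [(c, b), (d, \<not> b)] @ v @ X @ w, k(c := Cl ov, d := Cl (\<not> ov)))"
proof
  fix h
  define W' where "W' = u @ [(c, b), (d, \<not> b)] @ v @ X @ w"
  define K' where "K' = k(c := Cl ov, d := Cl (\<not> ov))"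
  have cl': "sing_chords (W', K') = {}" using cl X unfolding W'_def K'_def by (auto simp: sing_chords_conv)
  have cW: "chords W' = insert c (insert d (chords (u @ v @ w)))" unfolding W'_def using X by auto
  define g where "g = fresh W'"
  have g: "g \<notin> chords W'" unfolding g_def by (rule fresh_notin_chords)
  then have g': "g \<notin> chords (u @ v @ w)" "g \<noteq> c" "g \<noteq> d" using cW by auto
  have sing0: "hclass (sing0 (u @ v @ w, k)) = hclass (sing0 (W', K'))"
  proof (rule hclass_sing0_eqI[OF wf(1) wf(2)[folded W'_def] g'(1) g])
    have "sv_step (((g, True) # (g, False) # u) @ v @ w, k(g := Sg))
        (((g, True) # (g, False) # u) @ [(c, b), (d, \<not> b)] @ v @ X @ w, k(g := Sg, c := Cl ov, d := Cl (\<not> ov)))"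
      by (rule sv_step.r2) (use c g' X in auto)
    moreover have "k(g := Sg, c := Cl ov, d := Cl (\<not> ov)) = K'(g := Sg)"
      unfolding K'_def using g' by (auto simp: fun_eq_iff)
    ultimately show "homot (sing_kink g (u @ v @ w, k)) (sing_kink g (W', K'))"
      using homot_sv_step wf_word_kink[OF wf(1) g'(1), of True] wf_word_kink[OF wf(2)[folded W'_def] g, of True]
      unfolding W'_def sing_kink_def by auto
  qed
  have glue_cd: "hclass (W', K'(c := Sg)) = hclass (W', K'(d := Sg))"
  proof -
    have "K'(c := Sg) = k(c := Sg, d := Cl (\<not> ov))" "K'(d := Sg) = k(c := Cl ov, d := Sg)"
      unfolding K'_def using c(3) by (auto simp: fun_eq_iff)
    then show ?thesis
      using homot_glue_r2_bigon[OF wf(2) X, of k ov] hclass_eq_iff unfolding W'_def by simp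
  qed
  have "gluing_term (W', K') x h = gluing_term (u @ v @ w, k) x h" if x: "x \<in> chords (u @ v @ w)" for x
  proof (rule gluing_term_eqI[OF _ _ sing0])
    have xc: "x \<noteq> c" "x \<noteq> d" using x c by auto
    then show "K' x = k x" unfolding K'_def by simp
    have "sv_step (u @ v @ w, k(x := Sg)) (W', k(x := Sg, c := Cl ov, d := Cl (\<not> ov)))"
      unfolding W'_def by (rule sv_step.r2) (use c X in auto)
    moreover have "k(x := Sg, c := Cl ov, d := Cl (\<not> ov)) = K'(x := Sg)"
      unfolding K'_def using xc by (auto simp: fun_eq_iff)
    ultimately show "homot (u @ v @ w, k(x := Sg)) (W', K'(x := Sg))"
      using homot_sv_step[OF wf(1) wf(2)[folded W'_def]] by simp
  qed
  moreover have "gluing_term (W', K') c h + gluing_term (W', K') d h = 0"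
    unfolding gluing_term_def using glue_cd c(3) by (simp add: K'_def algebra_simps)
  ultimately have "Gl (W', K') h = Gl (u @ v @ w, k) h"
    unfolding Gl_eq_sum_gluing_term[OF cl'] Gl_eq_sum_gluing_term[OF cl] cW using c by (simp add: add.assoc)
  then show "Gl (u @ v @ w, k) h = Gl (u @ [(c, b), (d, \<not> b)] @ v @ X @ w, k(c := Cl ov, d := Cl (\<not> ov))) h"
    unfolding W'_def K'_def by simp
qed

lemma Gl_r3:
  assumes r3: "r3_ok k X Y Z"
    and wf: "wf_word (A @ X @ B @ Y @ C @ Z @ D)" "wf_word (A @ rev X @ B @ rev Y @ C @ rev Z @ D)"
    and cl: "sing_chords (A @ X @ B @ Y @ C @ Z @ D, k) = {}"
  shows "Gl (A @ X @ B @ Y @ C @ Z @ D, k) = Gl (A @ rev X @ B @ rev Y @ C @ rev Z @ D, k)"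
proof (rule Gl_cong[OF cl])
  show "sing_chords (A @ rev X @ B @ rev Y @ C @ rev Z @ D, k) = {}"
    using cl by (auto simp: sing_chords_conv)
  show "chords (A @ X @ B @ Y @ C @ Z @ D) = chords (A @ rev X @ B @ rev Y @ C @ rev Z @ D)" by auto
  show "k c = k c \<and> hclass (A @ X @ B @ Y @ C @ Z @ D, k(c := Sg))
      = hclass (A @ rev X @ B @ rev Y @ C @ rev Z @ D, k(c := Sg))"
    if "c \<in> chords (A @ X @ B @ Y @ C @ Z @ D)" for c
    using homot_glue_r3[OF r3 wf cl that] hclass_eq_iff by blast
  define g where "g = fresh (A @ X @ B @ Y @ C @ Z @ D)"
  have g: "g \<notin> chords (A @ X @ B @ Y @ C @ Z @ D)" unfolding g_def by (rule fresh_notin_chords)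
  then have g': "g \<notin> chords (A @ rev X @ B @ rev Y @ C @ rev Z @ D)" by auto
  have "r3_ok (k(g := Sg)) X Y Z" by (rule r3_ok_kinds_cong[OF r3]) (use g in auto)
  from sv_step.r3[OF this, where A="(g, True) # (g, False) # A"]
  have "homot (sing_kink g (A @ X @ B @ Y @ C @ Z @ D, k)) (sing_kink g (A @ rev X @ B @ rev Y @ C @ rev Z @ D, k))"
    using homot_sv_step wf_word_kink[OF wf(1) g, of True] wf_word_kink[OF wf(2) g', of True]
    unfolding sing_kink_def by auto
  then show "hclass (sing0 (A @ X @ B @ Y @ C @ Z @ D, k)) = hclass (sing0 (A @ rev X @ B @ rev Y @ C @ rev Z @ D, k))"
    by (rule hclass_sing0_eqI[OF wf g g'])
qed

lemma Gl_sv_step: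
  "sv_step x y \<Longrightarrow> wf_gd x \<Longrightarrow> wf_gd y \<Longrightarrow> sing_chords x = {} \<Longrightarrow> Gl x = Gl y"
proof (induction rule: sv_step.induct)
  case (rot u v k) then show ?case using Gl_rotate by simp
next
  case (ren f w k' k) then show ?case using Gl_rename by simp
next
  case (r1 c u v k b ov) then show ?case using Gl_r1 by simp
next
  case (r2 c u v w d X b k ov) then show ?case using Gl_r2 by simp
next
  case (r3 k X Y Z A B C D) then show ?case using Gl_r3 by simp
next
  case (rotv k X Y A B C)
  then obtain c d e where "k d = Sg" "X \<in> {[(c, e), (d, \<not> e)], [(d, \<not> e), (c, e)]}"
    unfolding rot_ok_def by blast
  then show ?case using rotv.prems(3) by (auto simp: sing_chords_conv)
qed

lemma sv_step_sing_chords_empty: "sv_step x y \<Longrightarrow> sing_chords x = {} \<longleftrightarrow> sing_chords y = {}"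
  using sv_step_sing_chords by fastforce

theorem vinvariant_Gl: "vinvariant Gl"
  unfolding vinvariant_def
proof (intro allI impI)
  fix d d' assume a: "is_vdiag d \<and> is_vdiag d' \<and> veq d d'"
  have "sing_chords d' = {} \<and> Gl d = Gl d'"
  proof (rule equivclp_preserves[where P="\<lambda>x. sing_chords x = {}"])
    show "equivclp (\<lambda>x y. wf_gd x \<and> wf_gd y \<and> sv_step x y) d d'" using a veq_def by simp
  qed (use a sv_step_sing_chords_empty Gl_sv_step is_vdiag_def in auto)
  then show "Gl d = Gl d'" by blast
qed

section \<open>The gluing invariant has degree one\<close>

definition resolution :: "gd \<Rightarrow> nat set \<Rightarrow> nat \<Rightarrow> ckind" where
  "resolution d S = (\<lambda>c. if c \<in> S then Cl False else if c \<in> sing_chords d then Cl True else snd d c)"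

lemma Vext_eq_sum_resolution:
  "Vext V d = (\<Sum>S\<in>Pow (sing_chords d). (if even (card S) then id else uminus) (V (fst d, resolution d S)))"
  unfolding Vext_def resolution_def by simp

lemma sum_fun_apply: "(\<Sum>x\<in>A. f x) h = (\<Sum>x\<in>A. f x h)"
  by (induction A rule: infinite_finite_induct) auto

lemma Vext_apply:
  "Vext (V :: gd \<Rightarrow> gd set \<Rightarrow> int) d h =
     (\<Sum>S\<in>Pow (sing_chords d). (if even (card S) then 1 else -1) * V (fst d, resolution d S) h)"
  unfolding Vext_eq_sum_resolution sum_fun_apply by (rule sum.cong) auto

lemma sing_chords_resolution [simp]: "sing_chords (w, resolution (w, k) S) = {}"
  by (auto simp: sing_chords_conv resolution_def)

lemma alternating_sum_eq_0:
  fixes g :: "'b set \<Rightarrow> 'a::comm_ring_1"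
  assumes "finite P" "p \<in> P" and "\<And>T. T \<subseteq> P - {p} \<Longrightarrow> g (insert p T) = g T"
  shows "(\<Sum>S\<in>Pow P. (if even (card S) then 1 else -1) * g S) = 0"
proof -
  define P' where "P' = P - {p}"
  have P: "P = insert p P'" "p \<notin> P'" "finite P'" using assms(1,2) unfolding P'_def by auto
  have inj: "inj_on (insert p) (Pow P')"
    using P(2) unfolding inj_on_def by (metis PowD insert_absorb insert_ident subset_iff)
  have "(\<Sum>S\<in>Pow P. (if even (card S) then 1 else -1) * g S) =
      (\<Sum>S\<in>Pow P'. (if even (card S) then 1 else -1) * g S) +
      (\<Sum>T\<in>Pow P'. (if even (card (insert p T)) then 1 else -1) * g (insert p T))"
    unfolding P(1) Pow_insert using P(2,3) inj
    by (subst sum.union_disjoint) (auto simp: sum.reindex)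
  also have "(\<Sum>T\<in>Pow P'. (if even (card (insert p T)) then 1 else -1) * g (insert p T)) =
      - (\<Sum>T\<in>Pow P'. (if even (card T) then 1 else -1) * g T)"
    unfolding sum_negf[symmetric]
  proof (rule sum.cong)
    fix T assume T: "T \<in> Pow P'"
    then have "p \<notin> T" "finite T" using P(2,3) finite_subset by auto
    then show "(if even (card (insert p T)) then 1 else -1) * g (insert p T) =
        - ((if even (card T) then 1 else -1) * g T)"
      using assms(3) T unfolding P'_def by auto
  qed simp
  finally show ?thesis by simp
qed

lemma homot_change_crossings:
  assumes "wf_word w" "finite D" "D \<subseteq> chords w"
    and "\<forall>c\<in>D. (\<exists>o1. k c = Cl o1) \<and> (\<exists>o2. k' c = Cl o2)" and "\<forall>c. c \<notin> D \<longrightarrow> k c = k' c"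
  shows "homot (w, k) (w, k')"
  using assms(2-5)
proof (induction D arbitrary: k rule: finite_induct)
  case empty
  then have "k = k'" by auto
  then show ?case by simp
next
  case (insert x D)
  obtain o1 o2 where o: "k x = Cl o1" "k' x = Cl o2" using insert.prems by auto
  have "homot (w, k) (w, k(x := Cl o2))"
    using homot_crossing_change[of w x k o1 o2] assms(1) o(1) insert.prems by auto
  also have "homot \<dots> (w, k')"
    by (rule insert.IH) (use insert.prems o insert.hyps in auto)
  finally show ?case .
qed

lemma hclass_glue_resolution:
  assumes "wf_word w" "S \<subseteq> sing_chords (w, k)"
  shows "hclass (w, (resolution (w, k) S)(c := Sg)) = hclass (w, (resolution (w, k) {})(c := Sg))"
  unfolding hclass_eq_iff
  by (rule homot_change_crossings[OF assms(1), where D="sing_chords (w, k) - {c}"])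
    (use assms(2) in \<open>auto simp: resolution_def sing_chords_conv\<close>)

lemma hclass_sing0_resolution:
  assumes "wf_word w" "S \<subseteq> sing_chords (w, k)"
  shows "hclass (sing0 (w, resolution (w, k) S)) = hclass (sing0 (w, resolution (w, k) {}))"
  unfolding hclass_eq_iff sing0_def fst_conv snd_conv
  by (rule homot_change_crossings[OF wf_word_kink[OF assms(1) fresh_notin_chords, of True, simplified],
        where D="sing_chords (w, k)"])
    (use assms(2) fresh_notin_chords[of w] in \<open>auto simp: resolution_def sing_chords_conv\<close>)

text \<open>With at least two double points, the alternating sum over the resolutions of the signs
of any crossing c vanishes: it does not depend on a double point other than c.\<close>

theorem vass_le_Gl: "vass_le Gl 1"
  unfolding vass_le_def
proof (intro allI impI)
  fix d :: gd assume d: "wf_gd d \<and> 1 < nsing d"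
  obtain w k where d_eq: "d = (w, k)" by fastforce
  define P where "P = sing_chords (w, k)"
  have wf: "wf_word w" using d d_eq by simp
  have card_P: "2 \<le> card P" using d d_eq unfolding nsing_def P_def by simp
  define A where "A c = hclass (w, (resolution (w, k) {})(c := Sg))" for c
  define B where "B = hclass (sing0 (w, resolution (w, k) {}))"
  have signs: "(\<Sum>S\<in>Pow P. (if even (card S) then 1 else -1) * sgn_ck (resolution (w, k) S c)) = 0" for c
  proof -
    have "\<not> P \<subseteq> {c}" using card_mono[of "{c}" P] card_P by auto
    then obtain p where p: "p \<in> P" "p \<noteq> c" by blast
    show ?thesis
      by (rule alternating_sum_eq_0[of P p]) (use p in \<open>auto simp: P_def resolution_def\<close>)
  qed
  show "Vext Gl d = 0"
  proof
    fix h
    let ?\<delta> = "\<lambda>c. (if h = A c then 1 else 0) - (if h = B then 1 else 0)"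
    have "Gl (w, resolution (w, k) S) h = (\<Sum>c\<in>chords w. sgn_ck (resolution (w, k) S c) * ?\<delta> c)"
      if "S \<subseteq> P" for S
      unfolding Gl_eq_sum_gluing_term[OF sing_chords_resolution] gluing_term_def glue_pair snd_conv
      using hclass_glue_resolution[OF wf that[unfolded P_def]] hclass_sing0_resolution[OF wf that[unfolded P_def]]
      by (simp add: A_def B_def)
    then have "Vext Gl d h = (\<Sum>S\<in>Pow P. (if even (card S) then 1 else -1) *
        (\<Sum>c\<in>chords w. sgn_ck (resolution (w, k) S c) * ?\<delta> c))"
      unfolding Vext_apply d_eq fst_conv P_def[symmetric] by (intro sum.cong) auto
    also have "\<dots> = (\<Sum>c\<in>chords w. \<Sum>S\<in>Pow P.
        (if even (card S) then 1 else -1) * (sgn_ck (resolution (w, k) S c) * ?\<delta> c))"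
      by (simp only: sum_distrib_left) (rule sum.swap)
    also have "\<dots> = (\<Sum>c\<in>chords w. ?\<delta> c *
        (\<Sum>S\<in>Pow P. (if even (card S) then 1 else -1) * sgn_ck (resolution (w, k) S c)))"
      by (simp only: sum_distrib_left mult_ac)
    finally show "Vext Gl d h = 0 h" by (simp add: signs)
  qed
qed

section \<open>A parity invariant of homotopy\<close>

text \<open>index_sum xs s is the sum of the positions at which s occurs in xs. For a chord s of a
well-formed word its parity is opposite to the parity of the number of chords interlaced with s.\<close>

fun index_sum :: "'a list \<Rightarrow> 'a \<Rightarrow> nat" where
  "index_sum [] s = 0"
| "index_sum (x # xs) s = index_sum xs s + count_list xs s"

lemma index_sum_append:
  "index_sum (xs @ ys) s = index_sum xs s + index_sum ys s + length xs * count_list ys s"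
  by (induction xs) auto

lemma index_sum_notin: "s \<notin> set xs \<Longrightarrow> index_sum xs s = 0"
  by (induction xs) auto

lemma even_index_sum_swap:
  "even (index_sum (P @ [p, q] @ Q) s) \<longleftrightarrow> (even (index_sum (P @ [q, p] @ Q) s) \<longleftrightarrow> (p = s) = (q = s))"
  by (auto simp: index_sum_append)

lemma even_index_sum_insert:
  "s \<notin> set L \<Longrightarrow> even (length L) \<Longrightarrow> even (index_sum (U @ L @ V) s) = even (index_sum (U @ V) s)"
  by (simp add: index_sum_append index_sum_notin)

lemma even_index_sum_rotate:
  assumes "count_list (xs @ ys) s = 2" "even (length (xs @ ys))"
  shows "even (index_sum (xs @ ys) s) = even (index_sum (ys @ xs) s)"
proof -
  consider "count_list xs s = 0" "count_list ys s = 2" | "count_list xs s = 1" "count_list ys s = 1"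
    | "count_list xs s = 2" "count_list ys s = 0"
    using assms(1) by fastforce
  then have "even (length xs * count_list ys s) = even (length ys * count_list xs s)"
    using assms(2) by cases auto
  then show ?thesis by (simp add: index_sum_append) blast
qed

lemma even_index_sum_swap2:
  assumes "((x1 = s) = (x2 = s)) = ((y1 = s) = (y2 = s))"
  shows "even (index_sum (A @ [x1, x2] @ B @ [y1, y2] @ C) s) =
         even (index_sum (A @ [x2, x1] @ B @ [y2, y1] @ C) s)"
  using even_index_sum_swap[of A x1 x2 "B @ [y1, y2] @ C" s]
    even_index_sum_swap[of "A @ [x2, x1] @ B" y1 y2 C s] assms by simp blast

lemma even_index_sum_swap3:
  assumes "((x1 = s) = (x2 = s)) = (((y1 = s) = (y2 = s)) = ((z1 = s) = (z2 = s)))"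
  shows "even (index_sum (A @ [x1, x2] @ B @ [y1, y2] @ C @ [z1, z2] @ D) s) =
         even (index_sum (A @ [x2, x1] @ B @ [y2, y1] @ C @ [z2, z1] @ D) s)"
  using even_index_sum_swap[of A x1 x2 "B @ [y1, y2] @ C @ [z1, z2] @ D" s]
    even_index_sum_swap[of "A @ [x2, x1] @ B" y1 y2 "C @ [z1, z2] @ D" s]
    even_index_sum_swap[of "A @ [x2, x1] @ B @ [y2, y1] @ C" z1 z2 D s] assms by simp blast

lemma count_list_map_inj_on:
  "inj_on f (insert s (set xs)) \<Longrightarrow> count_list (map f xs) (f s) = count_list xs s"
  by (induction xs) (auto simp: inj_on_def)

lemma index_sum_map_inj_on:
  "inj_on f (insert s (set xs)) \<Longrightarrow> index_sum (map f xs) (f s) = index_sum xs s"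
proof (induction xs)
  case (Cons x xs)
  then show ?case using count_list_map_inj_on[of f s xs] by (auto simp: inj_on_def)
qed simp

lemma count_list_wf_word:
  assumes wf: "wf_word w" and s: "s \<in> chords w"
  shows "count_list (map fst w) s = 2"
proof -
  have "count_list (map fst w) s = length (filter (\<lambda>l. fst l = s) w)"
    by (induction w) auto
  moreover have "set (filter (\<lambda>l. fst l = s) w) = {(s, True), (s, False)}"
    using wf_word_letter[OF wf s] by auto
  ultimately show ?thesis
    using distinct_card[of "filter (\<lambda>l. fst l = s) w"] wf unfolding wf_word_def by simp
qed

lemma even_length_wf_word:
  assumes wf: "wf_word w"
  shows "even (length w)"
proof -
  have "set w = chords w \<times> UNIV"
    using wf_word_letter[OF wf] by (auto dest: in_chordsI)
  then have "length w = card (chords w) * 2"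
    using distinct_card wf unfolding wf_word_def by (metis card_cartesian_product card_UNIV_bool)
  then show ?thesis by simp
qed

definition has_even_double_point :: "gd \<Rightarrow> bool" where
  "has_even_double_point d \<longleftrightarrow> (\<exists>s\<in>sing_chords d. odd (index_sum (map fst (fst d)) s))"

lemma has_even_double_point_cong:
  assumes "sing_chords y = g ` sing_chords x"
    and "\<forall>s\<in>sing_chords x. even (index_sum (map fst (fst y)) (g s)) = even (index_sum (map fst (fst x)) s)"
  shows "has_even_double_point x = has_even_double_point y"
  using assms unfolding has_even_double_point_def by auto

lemma r3_ok_letters:
  assumes "r3_ok k X Y Z"
  obtains x1 x2 y1 y2 z1 z2 where "X = [x1, x2]" "Y = [y1, y2]" "Z = [z1, z2]"
    "\<forall>s. ((fst x1 = s) = (fst x2 = s)) = (((fst y1 = s) = (fst y2 = s)) = ((fst z1 = s) = (fst z2 = s)))"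
  using assms
proof (rule r3_okE)
  fix a b c s12 s23 s31 o1 o2 o3
  assume "distinct [a, b, c]"
    "X = (if o1 then [(a, s12), (b, \<not> s31)] else [(b, \<not> s31), (a, s12)])"
    "Y = (if o2 then [(a, \<not> s12), (c, s23)] else [(c, s23), (a, \<not> s12)])"
    "Z = (if o3 then [(b, s31), (c, \<not> s23)] else [(c, \<not> s23), (b, s31)])"
  then show thesis
    by (intro that[of "X ! 0" "X ! 1" "Y ! 0" "Y ! 1" "Z ! 0" "Z ! 1"]) (auto split: if_splits)
qed

lemma has_even_double_point_sv_step:
  "sv_step x y \<Longrightarrow> wf_gd x \<Longrightarrow> has_even_double_point x = has_even_double_point y"
proof (induction rule: sv_step.induct)
  case (rot u v k)
  have "even (length (u @ v))" using even_length_wf_word[of "u @ v"] rot.prems by simp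
  then have "even (index_sum (map fst u @ map fst v) s) = even (index_sum (map fst v @ map fst u) s)"
    if "s \<in> chords (u @ v)" for s
    using even_index_sum_rotate[of "map fst u" "map fst v" s] count_list_wf_word[OF _ that] rot.prems
    by simp
  then show ?case by (intro has_even_double_point_cong[where g=id]) (auto simp: sing_chords_conv)
next
  case (ren f w k' k)
  show ?case
  proof (rule has_even_double_point_cong[where g=f])
    show "sing_chords (map (\<lambda>(c, b). (f c, b)) w, k') = f ` sing_chords (w, k)"
      using ren.hyps by (auto simp: sing_chords_conv chords_rename image_iff)
    have "map fst (map (\<lambda>(c, b). (f c, b)) w) = map f (map fst w)" by (induction w) auto
    moreover have "inj_on f (insert s (set (map fst w)))" if "s \<in> sing_chords (w, k)" for s
      using that ren.hyps(1) by (auto simp: sing_chords_conv chords_def insert_absorb)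
    ultimately show "\<forall>s\<in>sing_chords (w, k).
        even (index_sum (map fst (fst (map (\<lambda>(c, b). (f c, b)) w, k'))) (f s))
        = even (index_sum (map fst (fst (w, k))) s)"
      using index_sum_map_inj_on by (metis fst_conv)
  qed
next
  case (r1 c u v k b ov)
  have "even (index_sum (map fst u @ [c, c] @ map fst v) s) = even (index_sum (map fst u @ map fst v) s)"
    if "s \<in> chords (u @ v)" for s
    using that r1.hyps even_index_sum_insert[of s "[c, c]" "map fst u" "map fst v"] by auto
  then show ?case using r1.hyps
    by (intro has_even_double_point_cong[where g=id]) (auto simp: sing_chords_conv)
next
  case (r2 c u v w d X b k ov)
  have "even (index_sum (map fst u @ [c, d] @ map fst v @ map fst X @ map fst w) s)
      = even (index_sum (map fst u @ map fst v @ map fst w) s)" if "s \<in> chords (u @ v @ w)" for s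
  proof -
    have "s \<notin> set [c, d]" "s \<notin> set (map fst X)" "even (length X)" using that r2.hyps by auto
    then show ?thesis
      using even_index_sum_insert[of s "[c, d]" "map fst u" "map fst v @ map fst X @ map fst w"]
        even_index_sum_insert[of s "map fst X" "map fst u @ map fst v" "map fst w"] by simp
  qed
  then show ?case using r2.hyps
    by (intro has_even_double_point_cong[where g=id]) (auto simp: sing_chords_conv)
next
  case (r3 k X Y Z A B C D)
  obtain x1 x2 y1 y2 z1 z2 where xyz: "X = [x1, x2]" "Y = [y1, y2]" "Z = [z1, z2]"
    and same: "\<forall>s. ((fst x1 = s) = (fst x2 = s)) = (((fst y1 = s) = (fst y2 = s)) = ((fst z1 = s) = (fst z2 = s)))"
    by (rule r3_ok_letters[OF r3.hyps])
  show ?case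
    using even_index_sum_swap3[OF same[rule_format], of "map fst A" "map fst B" "map fst C" "map fst D"] xyz
    by (intro has_even_double_point_cong[where g=id]) (auto simp: sing_chords_conv)
next
  case (rotv k X Y A B C)
  obtain c d e where XY: "X \<in> {[(c, e), (d, \<not> e)], [(d, \<not> e), (c, e)]}"
    "Y \<in> {[(c, \<not> e), (d, e)], [(d, e), (c, \<not> e)]}"
    using rotv.hyps unfolding rot_ok_def by blast
  obtain x1 x2 y1 y2 where xy: "X = [x1, x2]" "Y = [y1, y2]"
    and same: "\<forall>s. ((fst x1 = s) = (fst x2 = s)) = ((fst y1 = s) = (fst y2 = s))"
    by (rule that[of "X ! 0" "X ! 1" "Y ! 0" "Y ! 1"]) (use XY in auto)
  show ?case
    using even_index_sum_swap2[OF same[rule_format], of "map fst A" "map fst B" "map fst C"] xy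
    by (intro has_even_double_point_cong[where g=id]) (auto simp: sing_chords_conv flipl_def)
qed

lemma has_even_double_point_homot:
  assumes "homot x y"
  shows "has_even_double_point x = has_even_double_point y"
proof -
  have cc: "has_even_double_point x = has_even_double_point y" if "cc_step x y" for x y
    using that cc_step_sing_chords[OF that]
    by (cases rule: cc_step.cases) (simp add: has_even_double_point_def)
  have "True \<and> has_even_double_point x = has_even_double_point y"
    by (rule homot_preserves[OF assms]) (use cc has_even_double_point_sv_step in auto)
  then show ?thesis by simp
qed

lemma has_even_double_point_sing0:
  assumes "sing_chords (w, k) = {}"
  shows "has_even_double_point (sing0 (w, k))"
proof -
  have "fresh w \<notin> set (map fst w)" using fresh_notin_chords by (simp add: chords_def)
  then show ?thesis
    using sing_chords_sing_kink[OF assms fresh_notin_chords]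
    by (simp add: has_even_double_point_def sing0_eq_sing_kink sing_kink_def index_sum_notin)
qed

section \<open>The gluing invariant is not of degree zero\<close>

text \<open>On the diagram with two interlaced chords, the first of them singular, the gluing
invariant changes by 2 under resolution of the double point: its chord is interlaced with one
chord, so the gluing of the first chord is not homotopic to a kink of a double point.\<close>

theorem not_vass_le_Gl_0: "\<not> vass_le Gl 0"
proof
  assume le0: "vass_le Gl 0"
  define w0 :: "letter list" where "w0 = [(0, True), (1, True), (0, False), (1, False)]"
  define k0 :: "nat \<Rightarrow> ckind" where "k0 = (\<lambda>_. Cl True)(0 := Sg)"
  have wf: "wf_word w0" unfolding w0_def wf_word_def by auto
  have cw: "chords w0 = {0, 1}" unfolding w0_def by auto
  have sd: "sing_chords (w0, k0) = {0}" unfolding sing_chords_conv cw k0_def by auto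
  define h0 where "h0 = hclass (w0, k0)"
  define rp :: "nat \<Rightarrow> ckind" where "rp = (\<lambda>_. Cl True)"
  define rm where "rm = rp(0 := Cl False)"
  have res: "resolution (w0, k0) {} = rp" "resolution (w0, k0) {0} = rm"
    by (simp_all only: resolution_def sd) (auto simp: rp_def rm_def k0_def)
  have cl: "sing_chords (w0, rp) = {}" "sing_chords (w0, rm) = {}"
    by (auto simp: sing_chords_conv rp_def rm_def)
  have not_sing0: "h0 \<noteq> hclass (sing0 (w0, r))" if "sing_chords (w0, r) = {}" for r
  proof
    assume "h0 = hclass (sing0 (w0, r))"
    then have "homot (w0, k0) (sing0 (w0, r))" unfolding h0_def hclass_eq_iff .
    then have "has_even_double_point (w0, k0) = has_even_double_point (sing0 (w0, r))"
      by (rule has_even_double_point_homot)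
    moreover have "\<not> has_even_double_point (w0, k0)"
      unfolding has_even_double_point_def sd w0_def by simp
    ultimately show False using has_even_double_point_sing0[OF that] by simp
  qed
  have term0: "gluing_term (w0, r) 0 h0 = sgn_ck (r 0)" if "sing_chords (w0, r) = {}" "r(0 := Sg) = k0" for r
    unfolding gluing_term_def using not_sing0[OF that(1)] that(2) h0_def by simp
  have "homot (w0, rp(1 := Sg)) (w0, rp(1 := Sg, 0 := Cl False))"
    by (rule homot_crossing_change[OF wf]) (auto simp: cw rp_def)
  moreover have "rp(1 := Sg, 0 := Cl False) = rm(1 := Sg)" unfolding rm_def by (auto simp: fun_eq_iff)
  ultimately have "hclass (w0, rp(1 := Sg)) = hclass (w0, rm(1 := Sg))"
    by (simp add: hclass_eq_iff)
  then have term1: "gluing_term (w0, rp) 1 h0 = gluing_term (w0, rm) 1 h0"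
    unfolding gluing_term_def using not_sing0[OF cl(1)] not_sing0[OF cl(2)] by (simp add: rp_def rm_def)
  have "Pow {0::nat} = {{}, {0}}" by auto
  then have "Vext Gl (w0, k0) h0 = Gl (w0, rp) h0 - Gl (w0, rm) h0"
    unfolding Vext_apply sd fst_conv by (simp add: res)
  also have "\<dots> = 2"
    unfolding Gl_eq_sum_gluing_term[OF cl(1)] Gl_eq_sum_gluing_term[OF cl(2)] cw
    using term0[OF cl(1)] term0[OF cl(2)] term1 by (simp add: rp_def rm_def k0_def fun_eq_iff)
  finally have "Vext Gl (w0, k0) h0 = 2" .
  moreover have "Vext Gl (w0, k0) = 0"
    using le0 wf sd unfolding vass_le_def nsing_def by simp
  ultimately show False by simp
qed

section \<open>Degree-one invariants on diagrams with one double point\<close>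

lemma Vext_single_double_point:
  assumes "sing_chords (w, k) = {s}"
  shows "Vext V (w, k) = V (w, k(s := Cl True)) - V (w, k(s := Cl False))"
proof -
  have "Pow {s} = {{}, {s}}" by auto
  moreover have "resolution (w, k) {} = k(s := Cl True)" "resolution (w, k) {s} = k(s := Cl False)"
    unfolding resolution_def assms by (auto simp: fun_eq_iff)
  ultimately show ?thesis unfolding Vext_eq_sum_resolution assms by simp
qed

lemma veq_r2:
  assumes wf: "wf_word (u @ v @ w)" "wf_word (u @ [(c, b), (d, \<not> b)] @ v @ X @ w)"
    and X: "X \<in> {[(c, \<not> b), (d, b)], [(d, b), (c, \<not> b)]}"
  shows "veq (u @ v @ w, k) (u @ [(c, b), (d, \<not> b)] @ v @ X @ w, k(c := Cl ov, d := Cl (\<not> ov)))"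
proof -
  have dW: "distinct (u @ [(c, b), (d, \<not> b)] @ v @ X @ w)" using wf(2) wf_word_def by blast
  then have "c \<notin> chords (u @ v @ w)" "d \<notin> chords (u @ v @ w)" "c \<noteq> d"
    using X notin_chordsI[of c b] notin_chordsI[of d b] by auto
  then show ?thesis using veq_sv_step[OF wf] sv_step.r2 X by blast
qed

lemma rotv_chords_notin:
  assumes wf: "wf_word (A @ X @ B @ Y @ C)"
    and XY: "X \<in> {[(c, e), (s, \<not> e)], [(s, \<not> e), (c, e)]}" "Y \<in> {[(c, \<not> e), (s, e)], [(s, e), (c, \<not> e)]}"
  shows "c \<notin> chords (A @ B @ C)" "s \<notin> chords (A @ B @ C)" "c \<noteq> s"
proof -
  have "distinct (A @ X @ B @ Y @ C)" using wf wf_word_def by blast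
  then show "c \<notin> chords (A @ B @ C)" "s \<notin> chords (A @ B @ C)" "c \<noteq> s"
    using XY notin_chordsI[of c e] notin_chordsI[of s e] by auto
qed

text \<open>If the resolved double point s gets the same over/under information as the crossing c,
the rotation move is just the renaming exchanging c and s.\<close>

lemma veq_rotv_resolved_same:
  assumes wf: "wf_word (A @ X @ B @ Y @ C)" "wf_word (A @ rev (map flipl X) @ B @ rev (map flipl Y) @ C)"
    and XY: "X \<in> {[(c, e), (s, \<not> e)], [(s, \<not> e), (c, e)]}" "Y \<in> {[(c, \<not> e), (s, e)], [(s, e), (c, \<not> e)]}"
    and kc: "k c = Cl b"
  shows "veq (A @ X @ B @ Y @ C, k(s := Cl b)) (A @ rev (map flipl X) @ B @ rev (map flipl Y) @ C, k(s := Cl b))"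
proof -
  note notin = rotv_chords_notin[OF wf(1) XY]
  define sw :: "nat \<Rightarrow> nat" where "sw = id(c := s, s := c)"
  have "map (\<lambda>(x, y). (sw x, y)) L = L" if "c \<notin> chords L" "s \<notin> chords L" for L
    using that by (auto intro!: map_idI simp: sw_def dest: in_chordsI)
  then have "map (\<lambda>(x, y). (sw x, y)) (A @ X @ B @ Y @ C) = A @ rev (map flipl X) @ B @ rev (map flipl Y) @ C"
    using notin XY by (auto simp: sw_def flipl_def)
  moreover have "inj_on sw (chords (A @ X @ B @ Y @ C))" by (auto simp: sw_def inj_on_def)
  moreover have "\<forall>x\<in>chords (A @ X @ B @ Y @ C). (k(s := Cl b)) (sw x) = (k(s := Cl b)) x"
    using notin(3) kc by (auto simp: sw_def)
  ultimately show ?thesis using veq_sv_step[OF wf] sv_step.ren by metis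
qed

text \<open>Otherwise c and the resolved double point form an R2 bigon on both sides.\<close>

lemma veq_rotv_resolved_opposite:
  assumes wf: "wf_word (A @ X @ B @ Y @ C)" "wf_word (A @ rev (map flipl X) @ B @ rev (map flipl Y) @ C)"
    and XY: "X \<in> {[(c, e), (s, \<not> e)], [(s, \<not> e), (c, e)]}" "Y \<in> {[(c, \<not> e), (s, e)], [(s, e), (c, \<not> e)]}"
    and kc: "k c = Cl (\<not> b)"
  shows "veq (A @ X @ B @ Y @ C, k(s := Cl b)) (A @ rev (map flipl X) @ B @ rev (map flipl Y) @ C, k(s := Cl b))"
proof -
  note notin = rotv_chords_notin[OF wf(1) XY]
  have k_eq: "k(s := Cl b, c := Cl (\<not> b), s := Cl b) = k(s := Cl b)"
    "k(s := Cl b, s := Cl b, c := Cl (\<not> b)) = k(s := Cl b)"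
    using notin(3) kc by (auto simp: fun_eq_iff)
  have wf0: "wf_word (A @ B @ C)"
    using wf(1) notin wf_word_add_two_chords[of c "A @ B @ C" s "A @ X @ B @ Y @ C" e "\<not> e"] XY by auto
  have left: "veq (A @ B @ C, k(s := Cl b)) (A @ X @ B @ Y @ C, k(s := Cl b))"
    using XY(1)
  proof (elim insertE emptyE)
    assume "X = [(c, e), (s, \<not> e)]"
    then show ?thesis
      using veq_r2[where c=c and b=e and d=s and X=Y and k="k(s := Cl b)" and ov="\<not> b", OF wf0] wf(1) XY(2) k_eq
      by simp
  next
    assume "X = [(s, \<not> e), (c, e)]"
    then show ?thesis
      using veq_r2[where c=s and b="\<not> e" and d=c and X=Y and k="k(s := Cl b)" and ov=b, OF wf0] wf(1) XY(2) k_eq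
      by auto
  qed
  have right: "veq (A @ B @ C, k(s := Cl b)) (A @ rev (map flipl X) @ B @ rev (map flipl Y) @ C, k(s := Cl b))"
    using XY(1)
  proof (elim insertE emptyE)
    assume "X = [(c, e), (s, \<not> e)]"
    then show ?thesis
      using veq_r2[where c=s and b=e and d=c and X="rev (map flipl Y)" and k="k(s := Cl b)" and ov=b, OF wf0]
        wf(2) XY(2) k_eq by (auto simp: flipl_def)
  next
    assume "X = [(s, \<not> e), (c, e)]"
    then show ?thesis
      using veq_r2[where c=c and b="\<not> e" and d=s and X="rev (map flipl Y)" and k="k(s := Cl b)" and ov="\<not> b", OF wf0]
        wf(2) XY(2) k_eq by (auto simp: flipl_def)
  qed
  show ?thesis using veq_trans[OF veq_sym[OF left] right] .
qed

lemma veq_rotv_resolved: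
  assumes rot: "rot_ok k X Y" and wf: "wf_word (A @ X @ B @ Y @ C)"
      "wf_word (A @ rev (map flipl X) @ B @ rev (map flipl Y) @ C)"
    and sg: "sing_chords (A @ X @ B @ Y @ C, k) = {s}"
  shows "veq (A @ X @ B @ Y @ C, k(s := Cl b)) (A @ rev (map flipl X) @ B @ rev (map flipl Y) @ C, k(s := Cl b))"
proof -
  obtain c d e oc where h: "k c = Cl oc" "k d = Sg"
     "X \<in> {[(c, e), (d, \<not> e)], [(d, \<not> e), (c, e)]}" "Y \<in> {[(c, \<not> e), (d, e)], [(d, e), (c, \<not> e)]}"
    using rot unfolding rot_ok_def by blast
  have "d \<in> sing_chords (A @ X @ B @ Y @ C, k)" using h(2,3) by (auto simp: sing_chords_conv)
  then have "d = s" using sg by simp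
  then show ?thesis
    using veq_rotv_resolved_same[OF wf] veq_rotv_resolved_opposite[OF wf] h by (cases "oc = b") auto
qed

lemma r3_kinds_resolve:
  "r3_kinds ka kb kc s12 s23 s31 \<Longrightarrow>
   r3_kinds (if ka = Sg then Cl b else ka) (if kb = Sg then Cl b else kb) (if kc = Sg then Cl b else kc) s12 s23 s31"
  by (cases ka; cases kb; cases kc) auto

lemma r3_ok_resolve:
  assumes "r3_ok k X Y Z" and "sing_chords (A @ X @ B @ Y @ C @ Z @ D, k) = {s}"
  shows "r3_ok (k(s := Cl b)) X Y Z"
  using assms(1)
proof (rule r3_okE)
  fix a b' c s12 s23 s31 o1 o2 o3
  assume h: "distinct [a, b', c]"
    "X = (if o1 then [(a, s12), (b', \<not> s31)] else [(b', \<not> s31), (a, s12)])"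
    "Y = (if o2 then [(a, \<not> s12), (c, s23)] else [(c, s23), (a, \<not> s12)])"
    "Z = (if o3 then [(b', s31), (c, \<not> s23)] else [(c, \<not> s23), (b', s31)])"
    "(o1 = o3) = (s12 = s23)" "(o2 = o3) = (s31 \<noteq> s12)"
    "r3_kinds (k a) (k b') (k c) s12 s23 s31"
  have "(k(s := Cl b)) x = (if k x = Sg then Cl b else k x)" if "x \<in> {a, b', c}" for x
  proof -
    have "x \<in> chords (A @ X @ B @ Y @ C @ Z @ D)" using h(2,3) that by (auto split: if_splits)
    then have "k x = Sg \<longleftrightarrow> x = s" using assms(2) by (auto simp: sing_chords_conv)
    then show ?thesis by auto
  qed
  then have "r3_kinds ((k(s := Cl b)) a) ((k(s := Cl b)) b') ((k(s := Cl b)) c) s12 s23 s31"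
    using r3_kinds_resolve[OF h(7), of b] by simp
  then show ?thesis using h(1-6) unfolding r3_ok_def by blast
qed

lemma sv_step_resolve:
  "sv_step x y \<Longrightarrow> wf_gd x \<Longrightarrow> wf_gd y \<Longrightarrow> sing_chords x = {s} \<Longrightarrow>
   \<exists>s'. sing_chords y = {s'} \<and> (\<forall>b. veq (fst x, (snd x)(s := Cl b)) (fst y, (snd y)(s' := Cl b)))"
proof (induction rule: sv_step.induct)
  case (rot u v k)
  have "veq (u @ v, k(s := Cl b)) (v @ u, k(s := Cl b))" for b
    using veq_sv_step[of "u @ v" "v @ u"] sv_step.rot rot.prems by auto
  moreover have "sing_chords (v @ u, k) = {s}" using rot.prems by (auto simp: sing_chords_conv)
  ultimately show ?case by (intro exI[of _ s]) (simp add: fun_upd_def)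
next
  case (ren f w k' k)
  have s: "s \<in> chords w" using ren.prems(3) by (auto simp: sing_chords_conv)
  have "veq (w, k(s := Cl b)) (map (\<lambda>(c, b). (f c, b)) w, k'(f s := Cl b))" for b
  proof -
    have "\<forall>c\<in>chords w. (k'(f s := Cl b)) (f c) = (k(s := Cl b)) c"
      using ren.hyps s by (auto simp: inj_on_def)
    then have "sv_step (w, k(s := Cl b)) (map (\<lambda>(c, b). (f c, b)) w, k'(f s := Cl b))"
      by (rule sv_step.ren[OF ren.hyps(1)])
    then show ?thesis using veq_sv_step ren.prems by simp
  qed
  moreover have "sing_chords (map (\<lambda>(c, b). (f c, b)) w, k') = f ` sing_chords (w, k)"
    using ren.hyps by (auto simp: sing_chords_conv chords_rename image_iff)
  ultimately show ?case using ren.prems(3) by (intro exI[of _ "f s"]) (simp add: fun_upd_def)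
next
  case (r1 c u v k b ov)
  have sc: "s \<noteq> c" using r1.hyps r1.prems(3) by (auto simp: sing_chords_conv)
  have "veq (u @ v, k(s := Cl b')) (u @ [(c, b), (c, \<not> b)] @ v, k(c := Cl ov, s := Cl b'))" for b'
  proof -
    have "sv_step (u @ v, k(s := Cl b')) (u @ [(c, b), (c, \<not> b)] @ v, k(s := Cl b', c := Cl ov))"
      by (rule sv_step.r1) (use r1.hyps in simp)
    then show ?thesis using sc veq_sv_step r1.prems by (simp add: fun_upd_twist)
  qed
  moreover have "sing_chords (u @ [(c, b), (c, \<not> b)] @ v, k(c := Cl ov)) = {s}"
    using r1.prems(3) r1.hyps by (auto simp: sing_chords_conv)
  ultimately show ?case by (intro exI[of _ s]) (simp add: fun_upd_def)
next
  case (r2 c u v w d X b k ov)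
  have sc: "s \<noteq> c" "s \<noteq> d" using r2.hyps r2.prems(3) by (auto simp: sing_chords_conv)
  have "veq (u @ v @ w, k(s := Cl b'))
      (u @ [(c, b), (d, \<not> b)] @ v @ X @ w, k(c := Cl ov, d := Cl (\<not> ov), s := Cl b'))" for b'
  proof -
    have "sv_step (u @ v @ w, k(s := Cl b'))
        (u @ [(c, b), (d, \<not> b)] @ v @ X @ w, k(s := Cl b', c := Cl ov, d := Cl (\<not> ov)))"
      by (rule sv_step.r2) (use r2.hyps in auto)
    then show ?thesis using sc veq_sv_step r2.prems by (simp add: fun_upd_twist)
  qed
  moreover have "chords (u @ [(c, b), (d, \<not> b)] @ v @ X @ w) = insert c (insert d (chords (u @ v @ w)))"
    using r2.hyps(4) by auto
  then have "sing_chords (u @ [(c, b), (d, \<not> b)] @ v @ X @ w, k(c := Cl ov, d := Cl (\<not> ov))) = {s}"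
    using r2.prems(3) r2.hyps(1,2) unfolding sing_chords_conv by auto
  ultimately show ?case by (intro exI[of _ s]) (simp add: fun_upd_def)
next
  case (r3 k X Y Z A B C D)
  have "veq (A @ X @ B @ Y @ C @ Z @ D, k(s := Cl b)) (A @ rev X @ B @ rev Y @ C @ rev Z @ D, k(s := Cl b))" for b
    using veq_sv_step sv_step.r3[OF r3_ok_resolve[OF r3.hyps r3.prems(3)]] r3.prems by simp
  moreover have "sing_chords (A @ rev X @ B @ rev Y @ C @ rev Z @ D, k) = {s}"
    using r3.prems(3) by (auto simp: sing_chords_conv)
  ultimately show ?case by (intro exI[of _ s]) (simp add: fun_upd_def)
next
  case (rotv k X Y A B C)
  have "sing_chords (A @ rev (map flipl X) @ B @ rev (map flipl Y) @ C, k) = {s}"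
    using rotv.prems(3) by (auto simp: sing_chords_conv)
  then show ?case using veq_rotv_resolved[OF rotv.hyps] rotv.prems by (intro exI[of _ s]) (simp add: fun_upd_def)
qed

lemma Vext_sv_step:
  assumes inv: "vinvariant V" and step: "sv_step x y" "wf_gd x" "wf_gd y" and s: "sing_chords x = {s}"
  shows "Vext V x = Vext V y"
proof -
  obtain w k w' k' where xy: "x = (w, k)" "y = (w', k')" by fastforce
  obtain s' where s': "sing_chords y = {s'}" "\<And>b. veq (w, k(s := Cl b)) (w', k'(s' := Cl b))"
    using sv_step_resolve[OF step s] xy by auto
  have "is_vdiag (w, k(s := Cl b))" "is_vdiag (w', k'(s' := Cl b))" for b
    using s s'(1) step(2,3) xy by (auto simp: is_vdiag_def sing_chords_conv)
  then have "V (w, k(s := Cl b)) = V (w', k'(s' := Cl b))" for b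
    using inv s'(2) unfolding vinvariant_def by blast
  then show ?thesis
    using Vext_single_double_point[of w k s V] Vext_single_double_point[of w' k' s' V] s s'(1) xy by simp
qed

text \<open>With a second double point at c, the degree bound gives the four-term relation saying
that V^(1) is independent of the crossing at c.\<close>

lemma Vext_cc_step:
  assumes le1: "vass_le V 1" and step: "cc_step x y" "wf_gd x" and s: "sing_chords x = {s}"
  shows "Vext V x = Vext V y"
  using step(1)
proof (cases rule: cc_step.cases)
  case (cc c w k ov)
  have "s \<in> sing_chords x" using s by simp
  then have cs: "c \<noteq> s" using cc by (auto simp: sing_chords_conv)
  define d where "d = (w, k(c := Sg))"
  have sd: "sing_chords d = {s, c}" using s cc unfolding d_def by (auto simp: sing_chords_conv)
  define K where "K b1 b2 = k(s := Cl b1, c := Cl b2)" for b1 b2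
  have "Pow {s, c} = {{}, {s}, {c}, {s, c}}" by auto
  moreover have "resolution d {} = K True True" "resolution d {s} = K False True"
      "resolution d {c} = K True False" "resolution d {s, c} = K False False"
    unfolding resolution_def sd using cs by (auto simp: fun_eq_iff K_def d_def)
  ultimately have "Vext V d = V (w, K True True) - V (w, K False True) - V (w, K True False) + V (w, K False False)"
    unfolding Vext_eq_sum_resolution sd using cs by (simp add: d_def algebra_simps)
  moreover have "Vext V d = 0"
    using le1 step(2) sd cs cc unfolding vass_le_def nsing_def d_def by auto
  ultimately have four_term: "V (w, K True True) - V (w, K False True) = V (w, K True False) - V (w, K False False)"
    by (simp add: algebra_simps)
  have "k(s := Cl b) = K b ov" "(k(c := Cl (\<not> ov)))(s := Cl b) = K b (\<not> ov)" for b
    unfolding K_def using cc(4) cs by (auto simp: fun_eq_iff)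
  moreover have "sing_chords (w, k(c := Cl (\<not> ov))) = {s}" using s cc cs by (auto simp: sing_chords_conv)
  ultimately show ?thesis
    using Vext_single_double_point[of w k s V] Vext_single_double_point[of w "k(c := Cl (\<not> ov))" s V]
      four_term s cc by (cases ov) auto
qed

lemma Vext_homot:
  assumes inv: "vinvariant V" and le1: "vass_le V 1" and "homot x y" and "nsing x = 1"
  shows "Vext V x = Vext V y"
proof -
  have "nsing y = 1 \<and> Vext V x = Vext V y"
  proof (rule homot_preserves[OF assms(3)])
    fix x y :: gd assume "wf_gd x" "wf_gd y" "sv_step x y \<or> cc_step x y" "nsing x = 1"
    moreover obtain s where "sing_chords x = {s}"
      using \<open>nsing x = 1\<close> unfolding nsing_def by (auto simp: card_1_singleton_iff)
    ultimately show "Vext V x = Vext V y" using Vext_sv_step[OF inv] Vext_cc_step[OF le1] by blast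
  qed (use nsing_homot_step assms(4) in auto)
  then show ?thesis by simp
qed

section \<open>The homomorphism V*\<close>

lemma zsmul_0 [simp]: "zsmul 0 x = 0"
  and zsmul_1 [simp]: "zsmul 1 x = x"
  and zsmul_zero [simp]: "zsmul n 0 = 0"
  by (simp_all add: zsmul_def)

lemma zsmul_add_1: "zsmul (n + 1) x = zsmul n x + x"
proof (cases "0 \<le> n")
  case True
  then have "nat (n + 1) = Suc (nat n)" by simp
  then show ?thesis using True by (simp add: zsmul_def)
next
  case False
  show ?thesis
  proof (cases "n = -1")
    case True
    then show ?thesis by (simp add: zsmul_def)
  next
    case n: False
    then have "nat (- n) = Suc (nat (- (n + 1)))" using False by simp
    then show ?thesis using False n by (simp add: zsmul_def algebra_simps)
  qed
qed

lemma zsmul_add: "zsmul (m + n) x = zsmul m x + zsmul n x"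
proof (induction m rule: int_induct[where k=0])
  case (step1 i)
  have "zsmul (i + 1 + n) x = zsmul (i + n) x + x"
    using zsmul_add_1[of "i + n" x] by (simp add: algebra_simps)
  then show ?case using step1 zsmul_add_1[of i x] by (simp add: algebra_simps)
next
  case (step2 i)
  then show ?case
    using zsmul_add_1[of "i - 1 + n" x] zsmul_add_1[of "i - 1" x] by (simp add: algebra_simps)
qed simp

lemma zsmul_uminus: "zsmul (- n) x = - zsmul n x"
  using zsmul_add[of n "- n" x] by (simp add: eq_neg_iff_add_eq_0 add.commute)

definition class_value :: "(gd \<Rightarrow> 'a::ab_group_add) \<Rightarrow> gd set \<Rightarrow> 'a" where
  "class_value V h = Vext V (SOME d. d \<in> h)"

lemma Vstar_eq_sum:
  assumes "finite F" "{h. z h \<noteq> 0} \<subseteq> F"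
  shows "Vstar V z = (\<Sum>h\<in>F. zsmul (z h) (class_value V h))"
  unfolding Vstar_def class_value_def
  by (rule sum.mono_neutral_left) (use assms in \<open>auto intro: finite_subset\<close>)

lemma Vstar_zero [simp]: "Vstar V (\<lambda>h. 0) = 0"
  by (simp add: Vstar_def)

lemma Vstar_add:
  assumes "finite {h. z1 h \<noteq> 0}" "finite {h. z2 h \<noteq> 0}"
  shows "Vstar V (\<lambda>h. z1 h + z2 h) = Vstar V z1 + Vstar V z2"
proof -
  define F where "F = {h. z1 h \<noteq> 0} \<union> {h. z2 h \<noteq> 0}"
  have F: "finite F" using assms F_def by simp
  have "Vstar V (\<lambda>h. z1 h + z2 h) = (\<Sum>h\<in>F. zsmul (z1 h + z2 h) (class_value V h))"
    by (rule Vstar_eq_sum[OF F]) (auto simp: F_def)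
  also have "\<dots> = (\<Sum>h\<in>F. zsmul (z1 h) (class_value V h)) + (\<Sum>h\<in>F. zsmul (z2 h) (class_value V h))"
    by (simp add: zsmul_add sum.distrib)
  also have "\<dots> = Vstar V z1 + Vstar V z2"
    using Vstar_eq_sum[OF F, of z1 V] Vstar_eq_sum[OF F, of z2 V] F_def by auto
  finally show ?thesis .
qed

lemma Vstar_uminus:
  assumes "finite {h. z h \<noteq> 0}"
  shows "Vstar V (\<lambda>h. - z h) = - Vstar V z"
  using Vstar_add[OF assms, of "\<lambda>h. - z h" V] assms by (simp add: eq_neg_iff_add_eq_0 add.commute)

lemma Vstar_indicator_diff:
  "Vstar V (\<lambda>h. n * ((if h = g then 1 else 0) - (if h = S then 1 else 0)))
     = zsmul n (class_value V g) - zsmul n (class_value V S)"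
proof (cases "g = S")
  case False
  have "Vstar V (\<lambda>h. n * ((if h = g then 1 else 0) - (if h = S then 1 else 0))) =
      (\<Sum>h\<in>{g, S}. zsmul (n * ((if h = g then 1 else 0) - (if h = S then 1 else 0))) (class_value V h))"
    by (rule Vstar_eq_sum) auto
  then show ?thesis using False by (simp add: zsmul_uminus)
qed simp

lemma class_value_hclass:
  assumes "vinvariant V" "vass_le V 1" "nsing e = 1"
  shows "class_value V (hclass e) = Vext V e"
proof -
  have "e \<in> hclass e" by (simp add: hclass_def)
  then have "homot e (SOME d. d \<in> hclass e)" by (metis hclass_def mem_Collect_eq someI)
  then show ?thesis unfolding class_value_def using Vext_homot[OF assms(1,2) _ assms(3)] by metis
qed

section \<open>Universality\<close>

lemma Gl_finite_support: "finite {h. Gl d h \<noteq> 0}"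
proof (rule finite_subset)
  show "{h. Gl d h \<noteq> 0} \<subseteq> insert (hclass (sing0 d)) ((\<lambda>c. hclass (glue d c)) ` chords (fst d))"
    unfolding Gl_def by (force intro: sum.neutral)
qed simp

lemma Gl_crossing_change:
  assumes wf: "wf_word w" and cl: "sing_chords (w, k) = {}" and c: "c \<in> chords w" "k c = Cl ov"
  shows "Gl (w, k(c := Cl (\<not> ov))) h - Gl (w, k) h = 2 * (sgn_ck (Cl (\<not> ov)) *
      ((if h = hclass (w, k(c := Sg)) then 1 else 0) - (if h = hclass (sing0 (w, k)) then 1 else 0)))"
proof -
  define k' where "k' = k(c := Cl (\<not> ov))"
  have cl': "sing_chords (w, k') = {}" using cl unfolding k'_def by (auto simp: sing_chords_conv)
  define g where "g = fresh w"
  have g: "g \<notin> chords w" unfolding g_def by (rule fresh_notin_chords)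
  have sing0: "hclass (sing0 (w, k')) = hclass (sing0 (w, k))"
  proof -
    have "g \<noteq> c" using g c by auto
    then have "homot (sing_kink g (w, k)) (sing_kink g (w, k'))"
      unfolding sing_kink_def k'_def fst_conv snd_conv
      using homot_crossing_change[OF wf_word_kink[OF wf g, of True], of c "k(g := Sg)" ov "\<not> ov"] c
      by (simp add: fun_upd_twist)
    then show ?thesis
      using hclass_sing0_eqI[OF wf wf g g] by (simp add: eq_commute)
  qed
  have "gluing_term (w, k') x h = gluing_term (w, k) x h" if "x \<in> chords w" "x \<noteq> c" for x
  proof (rule gluing_term_eqI[OF _ _ sing0[symmetric]])
    show "k' x = k x" using that k'_def by simp
    have "homot (w, k(x := Sg)) (w, k(x := Sg, c := Cl (\<not> ov)))"
      by (rule homot_crossing_change[OF wf]) (use c that in auto)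
    moreover have "k(x := Sg, c := Cl (\<not> ov)) = k'(x := Sg)" unfolding k'_def using that by (auto simp: fun_eq_iff)
    ultimately show "homot (w, k(x := Sg)) (w, k'(x := Sg))" by simp
  qed
  then have "(\<Sum>x\<in>chords w - {c}. gluing_term (w, k') x h) = (\<Sum>x\<in>chords w - {c}. gluing_term (w, k) x h)"
    by (intro sum.cong) auto
  moreover have "gluing_term (w, k) c h = - gluing_term (w, k') c h"
    unfolding gluing_term_def using sing0 c by (simp add: k'_def)
  ultimately have "Gl (w, k') h - Gl (w, k) h = 2 * gluing_term (w, k') c h"
    unfolding Gl_eq_sum_gluing_term[OF cl'] Gl_eq_sum_gluing_term[OF cl] using c by (simp add: sum.remove)
  then show ?thesis unfolding gluing_term_def k'_def using sing0[unfolded k'_def] by simp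
qed

text \<open>The kink class contributes nothing: both resolutions of a kink are R1-equivalent to
the original knot.\<close>

lemma Vext_sing0_eq_0:
  assumes inv: "vinvariant V" and wf: "wf_word w" and cl: "sing_chords (w, k) = {}"
  shows "Vext V (sing0 (w, k)) = 0"
proof -
  define f where "f = fresh w"
  have f: "f \<notin> chords w" unfolding f_def by (rule fresh_notin_chords)
  have "V ((f, True) # (f, False) # w, k(f := Cl b)) = V (w, k)" for b
  proof -
    have "veq (w, k) ([] @ [(f, True), (f, \<not> True)] @ w, k(f := Cl b))"
      by (rule veq_sv_step[OF wf]) (use wf_word_kink[OF wf f, of True] f sv_step.r1[of f "[]" w k True b] in auto)
    moreover have "sing_chords ((f, True) # (f, False) # w, k(f := Cl b)) = {}"
      using cl by (auto simp: sing_chords_conv)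
    ultimately show ?thesis
      using inv wf wf_word_kink[OF wf f, of True] cl unfolding vinvariant_def is_vdiag_def by simp
  qed
  moreover have "sing_chords ((f, True) # (f, False) # w, k(f := Sg)) = {f}"
    using cl f by (auto simp: sing_chords_conv)
  ultimately show ?thesis
    using Vext_single_double_point[of "(f, True) # (f, False) # w" "k(f := Sg)" f V]
    unfolding sing0_def f_def by simp
qed

definition universal_formula :: "(gd \<Rightarrow> 'a::ab_group_add) \<Rightarrow> gd \<Rightarrow> gd \<Rightarrow> bool" where
  "universal_formula V K0 K \<longleftrightarrow> (\<forall>h. even (Gl K h - Gl K0 h)) \<and>
     V K = V K0 + Vstar V (\<lambda>h. (Gl K h - Gl K0 h) div 2)"

lemma finite_support_Gl_half_diff: "finite {h. (Gl a h - Gl b h) div 2 \<noteq> 0}"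
  by (rule finite_subset[OF _ finite_UnI[OF Gl_finite_support[of a] Gl_finite_support[of b]]]) auto

lemma universal_formula_refl: "universal_formula V K K"
  by (simp add: universal_formula_def)

lemma universal_formula_sym:
  assumes "universal_formula V K0 K"
  shows "universal_formula V K K0"
proof -
  have "(Gl K0 h - Gl K h) div 2 = - ((Gl K h - Gl K0 h) div 2)" for h
  proof -
    obtain m where m: "Gl K h - Gl K0 h = 2 * m" using assms unfolding universal_formula_def by blast
    then have "Gl K0 h - Gl K h = 2 * (- m)" by simp
    then show ?thesis by (simp only: m) simp
  qed
  moreover have "even (Gl K0 h - Gl K h)" for h
    using assms unfolding universal_formula_def by (metis dvd_minus_iff minus_diff_eq)
  ultimately show ?thesis
    using assms Vstar_uminus[OF finite_support_Gl_half_diff, of V K K0]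
    unfolding universal_formula_def by simp
qed

lemma universal_formula_trans:
  assumes "universal_formula V K0 K1" "universal_formula V K1 K2"
  shows "universal_formula V K0 K2"
proof -
  have "(Gl K2 h - Gl K0 h) div 2 = (Gl K1 h - Gl K0 h) div 2 + (Gl K2 h - Gl K1 h) div 2" for h
  proof -
    obtain m1 m2 where "Gl K1 h - Gl K0 h = 2 * m1" "Gl K2 h - Gl K1 h = 2 * m2"
      using assms unfolding universal_formula_def by blast
    moreover from this have "Gl K2 h - Gl K0 h = 2 * (m1 + m2)" by simp
    ultimately show ?thesis by simp
  qed
  moreover have "even (Gl K2 h - Gl K0 h)" for h
  proof -
    have "Gl K2 h - Gl K0 h = (Gl K2 h - Gl K1 h) + (Gl K1 h - Gl K0 h)" by simp
    then show ?thesis using assms unfolding universal_formula_def by (metis dvd_add)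
  qed
  ultimately show ?thesis
    using assms Vstar_add[OF finite_support_Gl_half_diff finite_support_Gl_half_diff, of V K1 K0 K2 K1]
    unfolding universal_formula_def by (simp add: algebra_simps)
qed

lemma universal_formula_cc_step:
  assumes inv: "vinvariant V" and le1: "vass_le V 1"
    and step: "cc_step y z" "wf_gd y" and vy: "is_vdiag y"
  shows "universal_formula V y z"
  using step(1)
proof (cases rule: cc_step.cases)
  case (cc c w k ov)
  have wf: "wf_word w" and cl: "sing_chords (w, k) = {}" using step(2) vy cc by (auto simp: is_vdiag_def)
  define g where "g = hclass (w, k(c := Sg))"
  define S where "S = hclass (sing0 (w, k))"
  define n where "n = sgn_ck (Cl (\<not> ov))"
  have diff: "Gl z h - Gl y h = 2 * (n * ((if h = g then 1 else 0) - (if h = S then 1 else 0)))" for h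
    using Gl_crossing_change[OF wf cl cc(3,4), of h] cc(1,2) g_def S_def n_def by simp
  have sing_c: "sing_chords (w, k(c := Sg)) = {c}" using cl cc(3) by (auto simp: sing_chords_conv)
  have "sing_chords (sing0 (w, k)) = {fresh w}"
    using cl fresh_notin_chords[of w] by (auto simp: sing0_def sing_chords_conv)
  then have "class_value V S = 0"
    unfolding S_def using class_value_hclass[OF inv le1] Vext_sing0_eq_0[OF inv wf cl]
    by (simp add: nsing_def)
  moreover have "class_value V g = V (w, k(c := Cl True)) - V (w, k(c := Cl False))"
    unfolding g_def using class_value_hclass[OF inv le1] Vext_single_double_point[OF sing_c]
    by (simp add: nsing_def sing_c)
  moreover have "k(c := Cl ov) = k" using cc(4) by auto
  ultimately have "V z = V y + zsmul n (class_value V g) - zsmul n (class_value V S)"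
    using cc(1,2) by (cases ov) (simp_all add: n_def zsmul_uminus algebra_simps)
  then show ?thesis
    unfolding universal_formula_def diff using Vstar_indicator_diff[of V n g S] by simp
qed

lemma universal_formula_homot_step:
  assumes inv: "vinvariant V" and le1: "vass_le V 1"
    and step: "wf_gd y" "wf_gd z" "sv_step y z \<or> cc_step y z" and vy: "is_vdiag y"
  shows "universal_formula V y z"
  using step(3)
proof
  assume sv: "sv_step y z"
  have "is_vdiag z" using vy step nsing_homot_step by (simp add: is_vdiag_def nsing_eq_0_iff[symmetric])
  moreover have "veq y z" unfolding veq_def using step sv by (intro r_into_equivclp) simp
  ultimately have "V y = V z" using inv vy unfolding vinvariant_def by blast
  moreover have "Gl y = Gl z" using Gl_sv_step[OF sv step(1,2)] vy by (simp add: is_vdiag_def)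
  ultimately show ?thesis by (simp add: universal_formula_def)
qed (rule universal_formula_cc_step[OF inv le1 _ step(1) vy])

theorem universal_formula_homot:
  assumes inv: "vinvariant V" and le1: "vass_le V 1" and "is_vdiag K0" "homot K0 K"
  shows "universal_formula V K0 K"
  using assms(4) unfolding homot_def equivclp_def
proof (induction rule: rtranclp_induct)
  case base
  show ?case by (rule universal_formula_refl)
next
  case (step y z)
  have vy: "is_vdiag y" using step.hyps(1) homot_is_vdiag assms(3) unfolding homot_def equivclp_def by blast
  from step.hyps(2) have "universal_formula V y z"
  proof (cases rule: symclpE)
    case base
    then show ?thesis using universal_formula_homot_step[OF inv le1 _ _ _ vy] by blast
  next
    case sym
    then have "is_vdiag z" using homot_is_vdiag[OF _ vy] unfolding homot_def by (blast intro: equivclp_sym r_into_equivclp)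
    then show ?thesis using sym universal_formula_homot_step[OF inv le1] universal_formula_sym by blast
  qed
  then show ?case using step.IH universal_formula_trans by blast
qed

theorem mainTheorem5:
  shows "vinvariant Gl \<and> vass_deg Gl 1 \<and>
    (\<forall>(V :: gd \<Rightarrow> 'a::ab_group_add) K K0.
       vinvariant V \<and> vass_deg V 1 \<and> is_vdiag K \<and> is_vdiag K0 \<and> homot K K0 \<longrightarrow>
       (\<forall>h. even (Gl K h - Gl K0 h)) \<and>
       V K = V K0 + Vstar V (\<lambda>h. (Gl K h - Gl K0 h) div 2))"
proof -
  have "vass_deg Gl 1" unfolding vass_deg_def using vass_le_Gl not_vass_le_Gl_0 by auto
  moreover have "universal_formula V K0 K"
    if "vinvariant V" "vass_deg V 1" "is_vdiag K0" "homot K K0" for V :: "gd \<Rightarrow> 'a" and K K0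
    using that universal_formula_homot[of V K0 K] homot_sym by (auto simp: vass_deg_def)
  ultimately show ?thesis using vinvariant_Gl unfolding universal_formula_def by blast
qed

end
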